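(* Let $\sigma^2>0$, $\gamma>0$, and let $n\ge 1$ be an integer. Let $\mathbf{H}'\in\mathbb{C}^{N_R\times M}$ and let $L$ be a positive integer with $L\le \operatorname{rank}(\mathbf{H}')$. Let $\lambda_{H'}(1)\ge\cdots\ge\lambda_{H'}(L)>0$ be the $L$ largest eigenvalues of $\mathbf{H}'^H\mathbf{H}'$, and let $\mathbf{V}^{(1)}\in\mathbb{C}^{M\times L}$ be a matrix whose orthonormal columns are corresponding right singular vectors of $\mathbf{H}'$ (i.e. corresponding unit-norm eigenvectors of $\mathbf{H}'^H\mathbf{H}'$). Consider the problem $$\min_{\mathbf{U}\in\mathbb{C}^{M\times L}} \operatorname{tr}\{\mathbf{U}^H\mathbf{U}\}\quad\text{subject to}\quad \mathbf{U}^H\mathbf{H}'^H\mathbf{H}'\mathbf{U}\ \text{invertible and}\ \sum_{\ell=1}^{L}\sigma^2\Big[\big(\mathbf{U}^H\mathbf{H}'^H\mathbf{H}'\mathbf{U}\big)^{-1}\Big]_{\ell,\ell}\le \frac{\gamma}{n}.$$ Define, for $\ell=1,\dots,L$, $$\lambda_{U}(\ell)=\sqrt{\nu\,\frac{\sigma^2}{\lambda_{H'}(\ell)}},$$ where $\nu>0$ is the (unique) constant such that $\sum_{\ell=1}^{L}\frac{\sigma^2}{\lambda_U(\ell)\,\lambda_{H'}(\ell)}=\frac{\gamma}{n}$, and let $\boldsymbol{\Lambda}_U=\operatorname{diag}(\lambda_U(1),\dots,\lambda_U(L))$. Then for every unitary $\mathbf{S}\in\mathbb{C}^{L\times L}$,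 the matrix $$\mathbf{U}=\mathbf{V}^{(1)}\boldsymbol{\Lambda}_U^{1/2}\mathbf{S}^H$$ is an optimal solution of the problem, and the optimal value equals $\sum_{\ell=1}^{L}\lambda_U(\ell)$. Moreover, $\mathbf{S}$ can be chosen so that every term satisfies $\sigma^2\big[(\mathbf{U}^H\mathbf{H}'^H\mathbf{H}'\mathbf{U})^{-1}\big]_{\ell,\ell}=\epsilon$ for all $\ell=1,\dots,L$, where $\epsilon=\frac{1}{L}\frac{\gamma}{n}$.
   Context: This is the per-subcarrier, per-user power-minimization problem arising in a zero-forcing transceiver design: $\mathbf{H}'$ plays the role of the equivalent channel matrix of a user on a subcarrier, $\mathbf{U}$ is the transmit precoding matrix, $\operatorname{tr}\{\mathbf{U}^H\mathbf{U}\}$ is (proportional to) the transmit power, and the quantities $\sigma^2[(\mathbf{U}^H\mathbf{H}'^H\mathbf{H}'\mathbf{U})^{-1}]_{\ell,\ell}$ are the mean-square errors of the $L$ data streams under the zero-forcing receiver $\mathbf{G}=(\mathbf{U}^H\mathbf{H}'^H\mathbf{H}'\mathbf{U})^{-1}\mathbf{U}^H\mathbf{H}'^H$. $[\mathbf{A}]_{\ell,\ell}$ denotes the $(\ell,\ell)$ entry of $\mathbf{A}$; $^H$ denotes conjugate transpose; $\boldsymbol{\Lambda}_U^{1/2}$ is the diagonal matrix with entries $\sqrt{\lambda_U(\ell)}$. *)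

theory Defs
  imports "Jordan_Normal_Form.Schur_Decomposition" "Jordan_Normal_Form.DL_Rank"
    "Jordan_Normal_Form.Gauss_Jordan_Elimination" "Jordan_Normal_Form.Char_Poly"
begin

definition mtrace :: "complex mat \<Rightarrow> complex" where
  "mtrace A = (\<Sum>i<dim_row A. A $$ (i, i))"

text \<open>Matrix inverse (meaningful when the matrix is invertible).\<close>
definition minv :: "complex mat \<Rightarrow> complex mat" where
  "minv A = the (mat_inverse A)"

definition unitary_mat :: "nat \<Rightarrow> complex mat \<Rightarrow> bool" where
  "unitary_mat L S \<longleftrightarrow> S \<in> carrier_mat L L \<and> mat_adjoint S * S = 1\<^sub>m L"

definition gram :: "complex mat \<Rightarrow> complex mat \<Rightarrow> complex mat" where
  "gram H U = mat_adjoint U * mat_adjoint H * H * U"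

definition feasible ::
  "real \<Rightarrow> real \<Rightarrow> nat \<Rightarrow> complex mat \<Rightarrow> nat \<Rightarrow> nat \<Rightarrow> complex mat \<Rightarrow> bool" where
  "feasible \<sigma>2 \<gamma> n H M L U \<longleftrightarrow>
     U \<in> carrier_mat M L \<and> invertible_mat (gram H U) \<and>
     Re (\<Sum>l<L. complex_of_real \<sigma>2 * minv (gram H U) $$ (l, l)) \<le> \<gamma> / real n"

end

theory Submission
  imports Defs
begin

text \<open>
  Write \<open>A = H\<^sup>H H\<close> and diagonalise it by a unitary matrix,
  \<open>V\<^sup>H A V = diag \<mu>\<close> with \<open>\<mu>\<close> sorted decreasingly.  For every \<open>M \<times> L\<close> matrix \<open>U\<close>
  with invertible \<open>G = U\<^sup>H A U\<close> we prove the trace inequality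
     \<open>(\<Sum>l<L. 1 / sqrt (\<mu> l))\<^sup>2 \<le> tr (U\<^sup>H U) * tr (G\<inverse>)\<close>.
  In coordinates \<open>X = V\<^sup>H U\<close> the numbers \<open>p i = \<mu> i (X G\<inverse> X\<^sup>H)\<^sub>i\<^sub>i\<close> are the diagonal
  of an orthogonal projection of rank \<open>L\<close>, so \<open>0 \<le> p i \<le> 1\<close> and \<open>\<Sum> p i = L\<close>; this
  gives \<open>\<Sum>l<L. 1/sqrt (\<mu> l) \<le> \<Sum>i. p i / sqrt (\<mu> i)\<close>, and two applications of
  Cauchy-Schwarz bound the right-hand side by \<open>sqrt (tr (U\<^sup>H U)) * sqrt (tr G\<inverse>)\<close>.
  With the MSE constraint \<open>\<sigma>\<^sup>2 tr G\<inverse> \<le> \<gamma>/n\<close> this is a lower bound on the power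
  of every feasible precoder, and the water-filling precoder
  \<open>U = V\<^sub>1 \<Lambda>\<^sub>U\<^sup>1\<^sup>/\<^sup>2 S\<^sup>H\<close> attains it, because \<open>U\<^sup>H U\<close> and \<open>G\<inverse>\<close> are unitary
  conjugates of diagonal matrices.  Choosing \<open>S\<close> as the normalised DFT matrix,
  whose entries all have modulus \<open>1/sqrt L\<close>, equalises the diagonal of \<open>G\<inverse>\<close>.
\<close>

lemma adjoint_dims[simp]:
  "dim_row (mat_adjoint A) = dim_col A" "dim_col (mat_adjoint A) = dim_row A"
  by (auto simp: mat_adjoint_def mat_of_rows_def)

lemma adjoint_index[simp]: "i < dim_col A \<Longrightarrow> j < dim_row A \<Longrightarrow>
   mat_adjoint (A::complex mat) $$ (i,j) = cnj (A $$ (j,i))"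
  by (auto simp: mat_adjoint_def mat_of_rows_def)

lemma adjoint_carrier[simp]: "A \<in> carrier_mat n m \<Longrightarrow> mat_adjoint A \<in> carrier_mat m n"
  unfolding carrier_mat_def by simp

lemma adjoint_adjoint[simp]: "mat_adjoint (mat_adjoint (A::complex mat)) = A"
  by (rule eq_matI) simp_all

lemma adjoint_mult: "A \<in> carrier_mat n k \<Longrightarrow> B \<in> carrier_mat k m \<Longrightarrow>
  mat_adjoint ((A::complex mat) * B) = mat_adjoint B * mat_adjoint A"
  by (rule eq_matI) (simp_all add: scalar_prod_def sum_conjugate mult.commute)

lemma adjoint_one[simp]: "mat_adjoint (1\<^sub>m n :: complex mat) = 1\<^sub>m n"
  by (rule eq_matI) simp_all

lemma adjoint_zero[simp]: "mat_adjoint (0\<^sub>m n m :: complex mat) = 0\<^sub>m m n"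
  by (rule eq_matI) simp_all

lemma adjoint_four_block: "A \<in> carrier_mat n1 m1 \<Longrightarrow> B \<in> carrier_mat n1 m2 \<Longrightarrow>
   C \<in> carrier_mat n2 m1 \<Longrightarrow> D \<in> carrier_mat n2 m2 \<Longrightarrow>
   mat_adjoint (four_block_mat A B C D :: complex mat) =
   four_block_mat (mat_adjoint A) (mat_adjoint C) (mat_adjoint B) (mat_adjoint D)"
  unfolding carrier_mat_def by (rule eq_matI) simp_all

lemma adjoint_diag_real:
  "mat_adjoint (mat_diag L (\<lambda>l. complex_of_real (f l))) = mat_diag L (\<lambda>l. complex_of_real (f l))"
  by (rule eq_matI) (auto simp: mat_diag_def)

lemma adjoint_mult_index: fixes W B :: "complex mat"
  assumes "W \<in> carrier_mat n m" "B \<in> carrier_mat n k" "i < m" "j < k"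
  shows "(mat_adjoint W * B) $$ (i,j) = col B j \<bullet>c col W i"
proof -
  have r: "row (mat_adjoint W) i = conjugate (col W i)"
    using assms by (intro eq_vecI) auto
  have "(mat_adjoint W * B) $$ (i,j) = conjugate (col W i) \<bullet> col B j"
    using assms r by simp
  also have "\<dots> = col B j \<bullet>c col W i"
    using assms by (simp add: conjugate_vec_sprod_comm[of _ n])
  finally show ?thesis .
qed

lemma adjoint_sandwich: fixes Z W A :: "complex mat"
  assumes Z: "Z \<in> carrier_mat p q" and W: "W \<in> carrier_mat q r" and A: "A \<in> carrier_mat p p"
  shows "mat_adjoint (Z * W) * A * (Z * W) = mat_adjoint W * (mat_adjoint Z * A * Z) * W"
proof -
  have aZ: "mat_adjoint Z \<in> carrier_mat q p" using Z by simp
  have aW: "mat_adjoint W \<in> carrier_mat r q" using W by simp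
  have ZW: "Z * W \<in> carrier_mat p r" using Z W by simp
  have AZW: "A * (Z * W) \<in> carrier_mat p r" using A ZW by simp
  have aZA: "mat_adjoint Z * A \<in> carrier_mat q p" using aZ A by simp
  have aZAZ: "mat_adjoint Z * A * Z \<in> carrier_mat q q" using aZA Z by simp
  have "mat_adjoint (Z * W) * A * (Z * W) = ((mat_adjoint W * mat_adjoint Z) * A) * (Z * W)"
    using adjoint_mult[OF Z W] by simp
  also have "\<dots> = (mat_adjoint W * mat_adjoint Z) * (A * (Z * W))"
    using assoc_mult_mat[OF mult_carrier_mat[OF aW aZ] A ZW] .
  also have "\<dots> = mat_adjoint W * (mat_adjoint Z * (A * (Z * W)))"
    using assoc_mult_mat[OF aW aZ AZW] .
  also have "mat_adjoint Z * (A * (Z * W)) = (mat_adjoint Z * A) * (Z * W)"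
    using assoc_mult_mat[OF aZ A ZW] by simp
  also have "\<dots> = ((mat_adjoint Z * A) * Z) * W"
    using assoc_mult_mat[OF aZA Z W] by simp
  also have "mat_adjoint W * (((mat_adjoint Z * A) * Z) * W) = mat_adjoint W * (mat_adjoint Z * A * Z) * W"
    using assoc_mult_mat[OF aW aZAZ W] by simp
  finally show ?thesis .
qed

lemma congruence_hermitian: fixes A U :: "complex mat"
  assumes A: "A \<in> carrier_mat m m" and U: "U \<in> carrier_mat m k" and hA: "mat_adjoint A = A"
  shows "mat_adjoint (mat_adjoint U * A * U) = mat_adjoint U * A * U"
  using adjoint_mult[OF mult_carrier_mat[OF adjoint_carrier[OF U] A] U]
    adjoint_mult[OF adjoint_carrier[OF U] A] hA
  by (simp add: assoc_mult_mat[OF adjoint_carrier[OF U] A U])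

lemma unitary_change_of_coordinates: fixes A V U D :: "complex mat"
  assumes A: "A \<in> carrier_mat M M" and V: "V \<in> carrier_mat M M" and VV: "V * mat_adjoint V = 1\<^sub>m M"
    and VD: "mat_adjoint V * A * V = D" and U: "U \<in> carrier_mat M L"
  shows "mat_adjoint U * A * U = mat_adjoint (mat_adjoint V * U) * D * (mat_adjoint V * U)"
proof -
  have aV: "mat_adjoint V \<in> carrier_mat M M" using V by simp
  have "U = V * (mat_adjoint V * U)"
    using assoc_mult_mat[OF V aV U] VV U by simp
  then have "mat_adjoint U * A * U = mat_adjoint (V * (mat_adjoint V * U)) * A * (V * (mat_adjoint V * U))"
    by simp
  also have "\<dots> = mat_adjoint (mat_adjoint V * U) * D * (mat_adjoint V * U)"
    unfolding VD[symmetric] by (rule adjoint_sandwich[OF V mult_carrier_mat[OF aV U] A])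
  finally show ?thesis .
qed

lemma cinner_self_real: fixes w :: "complex vec"
  shows "w \<bullet>c w = of_real (Re (w \<bullet>c w))" "Re (w \<bullet>c w) \<ge> 0"
  using conjugate_square_ge_0_vec[of w] by (auto simp: less_eq_complex_def complex_eq_iff)

lemma cinner_self_pos: fixes w :: "complex vec"
  shows "w \<in> carrier_vec n \<Longrightarrow> w \<noteq> 0\<^sub>v n \<Longrightarrow> Re (w \<bullet>c w) > 0"
  using conjugate_square_greater_0_vec[of w n] by (auto simp: less_complex_def)

lemma cinner_smult: fixes w u :: "complex vec"
  assumes "w \<in> carrier_vec n" "u \<in> carrier_vec n"
  shows "(a \<cdot>\<^sub>v w) \<bullet>c (b \<cdot>\<^sub>v u) = a * cnj b * (w \<bullet>c u)"
  using assms by (auto simp: scalar_prod_def sum_distrib_left intro!: sum.cong)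

definition normalize_vec :: "complex vec \<Rightarrow> complex vec" where
  "normalize_vec w = complex_of_real (1 / sqrt (Re (w \<bullet>c w))) \<cdot>\<^sub>v w"

lemma normalize_vec_unit: fixes v :: "complex vec"
  assumes v: "v \<in> carrier_vec n" "v \<noteq> 0\<^sub>v n"
  shows "normalize_vec v \<bullet>c normalize_vec v = 1" "normalize_vec v \<in> carrier_vec n"
proof -
  define r where "r = Re (v \<bullet>c v)"
  have pos: "r > 0" unfolding r_def by (rule cinner_self_pos[OF v])
  have vv: "v \<bullet>c v = of_real r" unfolding r_def by (rule cinner_self_real)
  have "normalize_vec v \<bullet>c normalize_vec v
      = complex_of_real (1/sqrt r) * cnj (complex_of_real (1/sqrt r)) * (v \<bullet>c v)"
    unfolding normalize_vec_def r_def by (rule cinner_smult[OF v(1) v(1)])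
  also have "\<dots> = complex_of_real (1/sqrt r * (1/sqrt r) * r)"
    unfolding vv by (simp only: complex_cnj_complex_of_real of_real_mult)
  also have "1/sqrt r * (1/sqrt r) * r = 1"
    using pos by (simp add: field_simps)
  finally show "normalize_vec v \<bullet>c normalize_vec v = 1" by simp
  show "normalize_vec v \<in> carrier_vec n" using v(1) unfolding normalize_vec_def by simp
qed

lemma normalize_vec_eigen: fixes A :: "complex mat"
  assumes "A \<in> carrier_mat n n" "v \<in> carrier_vec n" "A *\<^sub>v v = e \<cdot>\<^sub>v v"
  shows "A *\<^sub>v normalize_vec v = e \<cdot>\<^sub>v normalize_vec v"
  using assms unfolding normalize_vec_def by (simp add: mult_mat_vec smult_smult_assoc mult.commute)

lemma orthonormal_cols_unitary: fixes W :: "complex mat"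
  assumes W: "W \<in> carrier_mat n m"
    and orth: "\<And>i j. i < m \<Longrightarrow> j < m \<Longrightarrow> col W i \<bullet>c col W j = (if i = j then 1 else 0)"
  shows "mat_adjoint W * W = 1\<^sub>m m"
proof (rule eq_matI)
  fix i j assume "i < dim_row (1\<^sub>m m :: complex mat)" "j < dim_col (1\<^sub>m m :: complex mat)"
  then have i: "i < m" and j: "j < m" by auto
  have "(mat_adjoint W * W) $$ (i,j) = col W j \<bullet>c col W i"
    by (rule adjoint_mult_index[OF W W i j])
  then show "(mat_adjoint W * W) $$ (i,j) = 1\<^sub>m m $$ (i,j)" using orth[OF j i] i j by auto
qed (use W in auto)

text \<open>Every unit vector is the first column of a unitary matrix (basis completion
  followed by Gram-Schmidt orthonormalisation).\<close>
lemma unitary_extension: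
  fixes v :: "complex vec"
  assumes v: "v \<in> carrier_vec n" and v1: "v \<bullet>c v = 1"
  shows "\<exists>W. W \<in> carrier_mat n n \<and> mat_adjoint W * W = 1\<^sub>m n \<and> col W 0 = v"
proof -
  interpret cof_vec_space n "TYPE(complex)" .
  have v0: "v \<noteq> 0\<^sub>v n" using v1 by auto
  define b where "b = basis_completion v"
  define ws0 where "ws0 = gram_schmidt n b"
  from basis_completion[OF v v0, folded b_def]
  have dist_b: "distinct b" and indep: "\<not> lin_dep (set b)" and b: "set b \<subseteq> carrier_vec n"
    and hdb: "hd b = v" and len_b: "length b = n" by auto
  have n0: "n \<noteq> 0" using v v0 by auto
  from hdb len_b n0 obtain vs where bv: "b = v # vs" by (cases b, auto)
  from gram_schmidt_result[OF b dist_b indep refl, folded ws0_def]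
  have ws0: "set ws0 \<subseteq> carrier_vec n" "corthogonal ws0" "length ws0 = n"
    by (auto simp: len_b)
  from gram_schmidt_hd[OF v, of vs, folded bv] have hdws: "hd ws0 = v" unfolding ws0_def .
  have ws0c: "i < n \<Longrightarrow> ws0 ! i \<in> carrier_vec n" for i using ws0 by auto
  have ws0_ne: "i < n \<Longrightarrow> ws0 ! i \<noteq> 0\<^sub>v n" for i
    using corthogonalD[OF ws0(2), of i i] ws0 by auto
  define W where "W = mat_of_cols n (map normalize_vec ws0)"
  have W: "W \<in> carrier_mat n n"
    unfolding W_def using ws0 mat_of_cols_carrier(1)[of n "map normalize_vec ws0"] by simp
  have colW: "col W i = normalize_vec (ws0 ! i)" if i: "i < n" for i
    using normalize_vec_unit(2)[OF ws0c[OF i] ws0_ne[OF i]] i ws0(3) unfolding W_def by simp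
  have "mat_adjoint W * W = 1\<^sub>m n"
  proof (rule orthonormal_cols_unitary[OF W])
    fix i j assume i: "i < n" and j: "j < n"
    show "col W i \<bullet>c col W j = (if i = j then 1 else 0)"
    proof (cases "i = j")
      case True
      then show ?thesis using colW[OF i] normalize_vec_unit(1)[OF ws0c[OF i] ws0_ne[OF i]] by simp
    next
      case False
      have "col W i \<bullet>c col W j = complex_of_real (1 / sqrt (Re (ws0 ! i \<bullet>c ws0 ! i))) *
        cnj (complex_of_real (1 / sqrt (Re (ws0 ! j \<bullet>c ws0 ! j)))) * (ws0 ! i \<bullet>c ws0 ! j)"
        unfolding colW[OF i] colW[OF j] normalize_vec_def by (rule cinner_smult[OF ws0c[OF i] ws0c[OF j]])
      then show ?thesis using corthogonalD[OF ws0(2), of i j] i j ws0 False by auto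
    qed
  qed
  moreover have "col W 0 = v"
  proof -
    have "ws0 ! 0 = v" using hdws ws0 n0 by (cases ws0, auto)
    moreover have "normalize_vec v = v" unfolding normalize_vec_def using v1 by simp
    ultimately show ?thesis using colW n0 by auto
  qed
  ultimately show ?thesis using W by blast
qed

subsection \<open>The spectral theorem for Hermitian matrices\<close>

lemma hermitian_block_split:
  fixes A :: "complex mat"
  assumes A: "A \<in> carrier_mat n n" and herm: "mat_adjoint A = A" and n: "0 < n"
    and col0: "\<And>i. i < n \<Longrightarrow> A $$ (i,0) = (if i = 0 then e else 0)"
  shows "\<exists>A3. A3 \<in> carrier_mat (n-1) (n-1) \<and> mat_adjoint A3 = A3 \<and>
     A = four_block_mat (mat 1 1 (\<lambda>_. e)) (0\<^sub>m 1 (n-1)) (0\<^sub>m (n-1) 1) A3"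
proof -
  have entry_cnj: "A $$ (i,j) = cnj (A $$ (j,i))" if "i < n" "j < n" for i j
  proof -
    have "A $$ (i,j) = mat_adjoint A $$ (i,j)" using herm by simp
    also have "\<dots> = cnj (A $$ (j,i))" using A that by simp
    finally show ?thesis .
  qed
  have row0: "A $$ (0,j) = (if j = 0 then e else 0)" if j: "j < n" for j
  proof -
    have "cnj e = e" using entry_cnj[OF n n] col0[OF n] by simp
    then show ?thesis using entry_cnj[OF n j] col0[OF j] by auto
  qed
  define A3 where "A3 = mat (n-1) (n-1) (\<lambda>(i,j). A $$ (Suc i, Suc j))"
  have A3: "A3 \<in> carrier_mat (n-1) (n-1)" unfolding A3_def by simp
  have "A = four_block_mat (mat 1 1 (\<lambda>_. e)) (0\<^sub>m 1 (n-1)) (0\<^sub>m (n-1) 1) A3"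
  proof (rule eq_matI)
    fix i j assume "i < dim_row (four_block_mat (mat 1 1 (\<lambda>_. e)) (0\<^sub>m 1 (n-1)) (0\<^sub>m (n-1) 1) A3)"
      "j < dim_col (four_block_mat (mat 1 1 (\<lambda>_. e)) (0\<^sub>m 1 (n-1)) (0\<^sub>m (n-1) 1) A3)"
    then have i: "i < n" and j: "j < n" using A3 n by auto
    show "A $$ (i, j) = four_block_mat (mat 1 1 (\<lambda>_. e)) (0\<^sub>m 1 (n-1)) (0\<^sub>m (n-1) 1) A3 $$ (i, j)"
      using row0[OF j] col0[OF i] i j A3 by (cases i; cases j) (simp_all add: A3_def)
  qed (use A A3 n in auto)
  moreover have "mat_adjoint A3 = A3"
  proof (rule eq_matI)
    fix i j assume "i < dim_row A3" "j < dim_col A3"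
    then have i: "Suc i < n" and j: "Suc j < n" using A3 by auto
    show "mat_adjoint A3 $$ (i,j) = A3 $$ (i,j)"
      using entry_cnj[OF i j] i j A3 by (simp add: A3_def)
  qed (use A3 in auto)
  ultimately show ?thesis using A3 by blast
qed

lemma hermitian_deflation:
  fixes A :: "complex mat"
  assumes A: "A \<in> carrier_mat n n" and herm: "mat_adjoint A = A"
    and v: "v \<in> carrier_vec n" "v \<bullet>c v = 1" and Av: "A *\<^sub>v v = e \<cdot>\<^sub>v v"
  shows "\<exists>W A3. W \<in> carrier_mat n n \<and> mat_adjoint W * W = 1\<^sub>m n \<and>
     A3 \<in> carrier_mat (n-1) (n-1) \<and> mat_adjoint A3 = A3 \<and>
     mat_adjoint W * A * W = four_block_mat (mat 1 1 (\<lambda>_. e)) (0\<^sub>m 1 (n-1)) (0\<^sub>m (n-1) 1) A3"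
proof -
  obtain W where W: "W \<in> carrier_mat n n" and WW: "mat_adjoint W * W = 1\<^sub>m n" and W0: "col W 0 = v"
    using unitary_extension[OF v] by blast
  have n: "0 < n"
  proof (rule ccontr)
    assume "\<not> 0 < n"
    then have "v \<bullet>c v = 0" using v(1) by (simp add: scalar_prod_def)
    with v(2) show False by simp
  qed
  have aW: "mat_adjoint W \<in> carrier_mat n n" using W by simp
  have col0: "(mat_adjoint W * A * W) $$ (i,0) = (if i = 0 then e else 0)" if i: "i < n" for i
  proof -
    have "(mat_adjoint W * A * W) $$ (i,0) = col (A * W) 0 \<bullet>c col W i"
      unfolding assoc_mult_mat[OF aW A W] using n
      by (intro adjoint_mult_index[OF W mult_carrier_mat[OF A W] i]) simp
    also have "col (A * W) 0 = e \<cdot>\<^sub>v col W 0" by (simp only: col_mult2[OF A W n] W0 Av)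
    also have "(e \<cdot>\<^sub>v col W 0) \<bullet>c col W i = e * (col W 0 \<bullet>c col W i)"
      using W i n by (simp add: scalar_prod_def sum_distrib_left mult.assoc)
    also have "col W 0 \<bullet>c col W i = (mat_adjoint W * W) $$ (i,0)"
      by (rule adjoint_mult_index[OF W W i n, symmetric])
    finally show ?thesis unfolding WW using i n by simp
  qed
  have "mat_adjoint W * A * W \<in> carrier_mat n n"
    using mult_carrier_mat[OF mult_carrier_mat[OF aW A] W] .
  from hermitian_block_split[OF this congruence_hermitian[OF A W herm] n col0]
  show ?thesis using W WW by blast
qed

lemma block_diagonalization:
  fixes Q3 A3 :: "complex mat"
  assumes n: "0 < n" and Q3: "Q3 \<in> carrier_mat (n-1) (n-1)" and Q3u: "mat_adjoint Q3 * Q3 = 1\<^sub>m (n-1)"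
    and A3: "A3 \<in> carrier_mat (n-1) (n-1)"
    and Q3d: "mat_adjoint Q3 * A3 * Q3 = mat_diag (n-1) (\<lambda>i. es!i)"
  shows "\<exists>F. F \<in> carrier_mat n n \<and> mat_adjoint F * F = 1\<^sub>m n \<and>
     mat_adjoint F * four_block_mat (mat 1 1 (\<lambda>_. e)) (0\<^sub>m 1 (n-1)) (0\<^sub>m (n-1) 1) A3 * F
       = mat_diag n (\<lambda>i. (e#es)!i)"
proof -
  have nn: "n = 1 + (n - 1)" using n by simp
  define E :: "complex mat" where "E = mat 1 1 (\<lambda>_. e)"
  have E: "E \<in> carrier_mat 1 1" unfolding E_def by simp
  define F where "F = four_block_mat (1\<^sub>m 1) (0\<^sub>m 1 (n-1)) (0\<^sub>m (n-1) 1) Q3"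
  have F: "F \<in> carrier_mat n n" unfolding F_def using Q3 nn by (metis four_block_carrier_mat one_carrier_mat)
  have aQ3: "mat_adjoint Q3 \<in> carrier_mat (n-1) (n-1)" using Q3 by simp
  have aF: "mat_adjoint F = four_block_mat (1\<^sub>m 1) (0\<^sub>m 1 (n-1)) (0\<^sub>m (n-1) 1) (mat_adjoint Q3)"
    unfolding F_def by (subst adjoint_four_block[OF _ _ _ Q3]) auto
  have FF: "mat_adjoint F * F = 1\<^sub>m n"
    unfolding aF unfolding F_def
    by (subst mult_four_block_mat[OF one_carrier_mat zero_carrier_mat zero_carrier_mat aQ3
           one_carrier_mat zero_carrier_mat zero_carrier_mat Q3])
       (use Q3 aQ3 Q3u nn in \<open>simp\<close>)
  have "mat_adjoint F * four_block_mat E (0\<^sub>m 1 (n-1)) (0\<^sub>m (n-1) 1) A3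
      = four_block_mat E (0\<^sub>m 1 (n-1)) (0\<^sub>m (n-1) 1) (mat_adjoint Q3 * A3)"
    unfolding aF
    by (subst mult_four_block_mat[OF one_carrier_mat zero_carrier_mat zero_carrier_mat aQ3
         E zero_carrier_mat zero_carrier_mat A3]) (use aQ3 A3 E right_mult_zero_mat[OF aQ3] in simp)
  also have "\<dots> * F = four_block_mat E (0\<^sub>m 1 (n-1)) (0\<^sub>m (n-1) 1) (mat_adjoint Q3 * A3 * Q3)"
    unfolding F_def
    by (subst mult_four_block_mat[OF E zero_carrier_mat zero_carrier_mat _
         one_carrier_mat zero_carrier_mat zero_carrier_mat Q3])
       (use Q3 aQ3 A3 E mult_carrier_mat[OF aQ3 A3]
          mult_carrier_mat[OF mult_carrier_mat[OF aQ3 A3] Q3] in \<open>simp_all\<close>)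
  also have "\<dots> = mat_diag n (\<lambda>i. (e#es)!i)"
  proof (rule eq_matI)
    fix i j assume "i < dim_row (mat_diag n (\<lambda>i. (e#es)!i))" "j < dim_col (mat_diag n (\<lambda>i. (e#es)!i))"
    then have i: "i < n" and j: "j < n" by (auto simp: mat_diag_def)
    show "four_block_mat E (0\<^sub>m 1 (n-1)) (0\<^sub>m (n-1) 1) (mat_adjoint Q3 * A3 * Q3) $$ (i, j)
        = mat_diag n (\<lambda>i. (e#es)!i) $$ (i, j)"
      unfolding Q3d using i j E by (cases i; cases j) (auto simp: E_def mat_diag_def)
  qed (use E Q3 n in \<open>auto simp: mat_diag_def\<close>)
  finally show ?thesis unfolding E_def using F FF by blast
qed

lemma unitary_mult: fixes W F :: "complex mat"
  assumes W: "W \<in> carrier_mat n n" "mat_adjoint W * W = 1\<^sub>m n"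
    and F: "F \<in> carrier_mat n n" "mat_adjoint F * F = 1\<^sub>m n"
  shows "mat_adjoint (W * F) * (W * F) = 1\<^sub>m n"
proof -
  have "mat_adjoint (W * F) * (W * F) = mat_adjoint (W * F) * 1\<^sub>m n * (W * F)"
    using right_mult_one_mat[OF adjoint_carrier[OF mult_carrier_mat[OF W(1) F(1)]]] by simp
  also have "\<dots> = mat_adjoint F * (mat_adjoint W * 1\<^sub>m n * W) * F"
    by (rule adjoint_sandwich[OF W(1) F(1) one_carrier_mat])
  finally show ?thesis
    using right_mult_one_mat[OF adjoint_carrier[OF W(1)]] right_mult_one_mat[OF adjoint_carrier[OF F(1)]]
      W(2) F(2) by simp
qed

lemma hermitian_spectral:
  fixes A :: "complex mat"
  assumes "A \<in> carrier_mat n n" "mat_adjoint A = A" "char_poly A = (\<Prod>e\<leftarrow>es. [:-e,1:])"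
  shows "\<exists>Q. Q \<in> carrier_mat n n \<and> mat_adjoint Q * Q = 1\<^sub>m n \<and>
     mat_adjoint Q * A * Q = mat_diag n (\<lambda>i. es!i)"
  using assms
proof (induct es arbitrary: n A)
  case Nil
  then have n: "n = 0" using degree_monic_char_poly[of A n] by auto
  show ?case by (rule exI[of _ "1\<^sub>m 0"]) (use n Nil in \<open>auto intro!: eq_matI simp: mat_diag_def\<close>)
next
  case (Cons e es n A)
  have A: "A \<in> carrier_mat n n" and herm: "mat_adjoint A = A" using Cons.prems by auto
  have cp: "char_poly A = [: -e, 1 :] * (\<Prod>e \<leftarrow> es. [:- e, 1:])" using Cons.prems by auto
  have ev: "eigenvalue A e" unfolding eigenvalue_root_char_poly[OF A] cp by simp
  define v0 where "v0 = find_eigenvector A e"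
  from find_eigenvector[OF A ev] have v0: "v0 \<in> carrier_vec n" "v0 \<noteq> 0\<^sub>v n" "A *\<^sub>v v0 = e \<cdot>\<^sub>v v0"
    unfolding v0_def eigenvector_def using A by auto
  have n: "0 < n"
  proof (rule ccontr)
    assume "\<not> 0 < n"
    then have "v0 = 0\<^sub>v n" using v0(1) by (intro eq_vecI) auto
    with v0(2) show False by simp
  qed
  obtain W A3 where W: "W \<in> carrier_mat n n" and WW: "mat_adjoint W * W = 1\<^sub>m n"
    and A3: "A3 \<in> carrier_mat (n-1) (n-1)" and hA3: "mat_adjoint A3 = A3"
    and blk: "mat_adjoint W * A * W = four_block_mat (mat 1 1 (\<lambda>_. e)) (0\<^sub>m 1 (n-1)) (0\<^sub>m (n-1) 1) A3"
    using hermitian_deflation[OF A herm normalize_vec_unit(2,1)[OF v0(1,2)] normalize_vec_eigen[OF A v0(1,3)]]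
    by blast
  txt \<open>The lower block carries the remaining eigenvalues, since unitary similarity
    preserves the characteristic polynomial.\<close>
  have sim: "similar_mat (mat_adjoint W * A * W) A"
    unfolding similar_mat_def similar_mat_wit_def Let_def
    by (rule exI[of _ "mat_adjoint W"], rule exI[of _ W])
      (use A W WW mat_mult_left_right_inverse[OF _ W WW]
         mult_carrier_mat[OF mult_carrier_mat[OF adjoint_carrier[OF W] A] W] in simp)
  have "[: -e, 1 :] * char_poly A3 = [: -e, 1 :] * (\<Prod>e \<leftarrow> es. [:- e, 1:])"
  proof -
    have "char_poly (mat 1 1 (\<lambda>_. e)) * char_poly A3 = char_poly (mat_adjoint W * A * W)"
      unfolding blk by (rule char_poly_four_block_zeros_col[OF _ _ A3, symmetric]) simp_all
    moreover have "char_poly (mat 1 1 (\<lambda>_. e)) = [: -e, 1 :]" by (simp add: char_poly_defs det_def sign_def)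
    ultimately show ?thesis using char_poly_similar[OF sim] cp by simp
  qed
  then have cp3: "char_poly A3 = (\<Prod>e \<leftarrow> es. [:- e, 1:])"
    by (metis mult_cancel_left pCons_eq_0_iff zero_neq_one)
  obtain Q3 where Q3: "Q3 \<in> carrier_mat (n-1) (n-1)" and Q3u: "mat_adjoint Q3 * Q3 = 1\<^sub>m (n-1)"
    and Q3d: "mat_adjoint Q3 * A3 * Q3 = mat_diag (n-1) (\<lambda>i. es!i)"
    using Cons.hyps[OF A3 hA3 cp3] by blast
  obtain F where F: "F \<in> carrier_mat n n" "mat_adjoint F * F = 1\<^sub>m n"
    and FAF: "mat_adjoint F * (mat_adjoint W * A * W) * F = mat_diag n (\<lambda>i. (e#es)!i)"
    using block_diagonalization[OF n Q3 Q3u A3 Q3d, of e] unfolding blk by blast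
  have "mat_adjoint (W * F) * A * (W * F) = mat_diag n (\<lambda>i. (e#es)!i)"
    unfolding adjoint_sandwich[OF W F(1) A] by (rule FAF)
  then show ?case using unitary_mult[OF W WW F] W F(1) by (intro exI[of _ "W * F"]) simp
qed

lemma hermitian_diagonalization:
  fixes A :: "complex mat" and mu :: "nat \<Rightarrow> real"
  assumes A: "A \<in> carrier_mat n n" and herm: "mat_adjoint A = A"
    and cp: "char_poly A = (\<Prod>i<n. [:- complex_of_real (mu i), 1:])"
  shows "\<exists>V. V \<in> carrier_mat n n \<and> V * mat_adjoint V = 1\<^sub>m n \<and>
     mat_adjoint V * A * V = mat_diag n (\<lambda>i. complex_of_real (mu i))"
proof -
  define es where "es = map (\<lambda>i. complex_of_real (mu i)) [0..<n]"
  have "(\<Prod>e\<leftarrow>map (\<lambda>i. complex_of_real (mu i)) [0..<m]. [:- e, 1:])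
      = (\<Prod>i<m. [:- complex_of_real (mu i), 1:])" for m
    by (induct m) simp_all
  then have "(\<Prod>i<n. [:- complex_of_real (mu i), 1:]) = (\<Prod>e\<leftarrow>es. [:- e, 1:])"
    unfolding es_def by simp
  then obtain V where V: "V \<in> carrier_mat n n" and VV: "mat_adjoint V * V = 1\<^sub>m n"
    and VD: "mat_adjoint V * A * V = mat_diag n (\<lambda>i. es!i)"
    using hermitian_spectral[OF A herm] cp by auto
  have "V * mat_adjoint V = 1\<^sub>m n" by (rule mat_mult_left_right_inverse[OF _ V VV]) (use V in simp)
  moreover have "mat_diag n (\<lambda>i. es!i) = mat_diag n (\<lambda>i. complex_of_real (mu i))"
    by (rule eq_matI) (auto simp: es_def mat_diag_def)
  ultimately show ?thesis using V VD by auto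
qed

lemma minv_unique: fixes G B :: "complex mat"
  assumes G: "G \<in> carrier_mat n n" and B: "B \<in> carrier_mat n n" and GB: "G * B = 1\<^sub>m n"
  shows "minv G = B"
proof -
  have BG: "B * G = 1\<^sub>m n" by (rule mat_mult_left_right_inverse[OF G B GB])
  have "G \<in> Units (ring_mat TYPE(complex) n undefined)"
    using G B GB BG unfolding Units_def ring_mat_def by auto
  then obtain C where C: "mat_inverse G = Some C" using mat_inverse(1)[OF G, of undefined] by auto
  from mat_inverse(2)[OF G C] have GC: "G * C = 1\<^sub>m n" and Cc: "C \<in> carrier_mat n n" by auto
  have "C = (B * G) * C" using BG Cc by simp
  also have "\<dots> = B * (G * C)" by (rule assoc_mult_mat[OF B G Cc])
  also have "\<dots> = B" using GC B by simp
  finally show ?thesis unfolding minv_def C by simp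
qed

lemma minv_invertible: fixes G :: "complex mat"
  assumes G: "G \<in> carrier_mat n n" and inv: "invertible_mat G"
  shows "G * minv G = 1\<^sub>m n" "minv G * G = 1\<^sub>m n" "minv G \<in> carrier_mat n n"
proof -
  obtain B where GB: "G * B = 1\<^sub>m (dim_row G)" and BG: "B * G = 1\<^sub>m (dim_row B)"
    using inv unfolding invertible_mat_def inverts_mat_def by blast
  have B: "B \<in> carrier_mat n n"
    using arg_cong[OF GB, of dim_col] arg_cong[OF BG, of dim_col] G by auto
  have GB': "G * B = 1\<^sub>m n" using GB G by simp
  then show "G * minv G = 1\<^sub>m n" "minv G * G = 1\<^sub>m n" "minv G \<in> carrier_mat n n"
    using minv_unique[OF G B GB'] B mat_mult_left_right_inverse[OF G B GB'] by auto
qed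

lemma inverse_hermitian: fixes G K :: "complex mat"
  assumes G: "G \<in> carrier_mat n n" and K: "K \<in> carrier_mat n n"
    and hG: "mat_adjoint G = G" and GK: "G * K = 1\<^sub>m n"
  shows "mat_adjoint K = K"
proof -
  have aK: "mat_adjoint K \<in> carrier_mat n n" using K by simp
  have KG: "mat_adjoint K * G = 1\<^sub>m n" using adjoint_mult[OF G K] GK hG by simp
  have "mat_adjoint K = mat_adjoint K * (G * K)" using GK right_mult_one_mat[OF aK] by simp
  also have "\<dots> = (mat_adjoint K * G) * K" by (rule assoc_mult_mat[OF aK G K, symmetric])
  also have "\<dots> = K" using KG K by simp
  finally show ?thesis .
qed

lemma cnj_square: "(complex_of_real (cmod u))\<^sup>2 = u * cnj u"
  by (metis complex_norm_square of_real_power)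

lemma cauchy_schwarz_real: fixes f g :: "nat \<Rightarrow> real" assumes "finite A"
  shows "(\<Sum>i\<in>A. f i * g i)\<^sup>2 \<le> (\<Sum>i\<in>A. (f i)\<^sup>2) * (\<Sum>i\<in>A. (g i)\<^sup>2)"
proof -
  have "0 \<le> (\<Sum>i\<in>A. \<Sum>j\<in>A. (f i * g j - f j * g i)\<^sup>2)" by (intro sum_nonneg) simp
  also have "\<dots> = (\<Sum>i\<in>A. \<Sum>j\<in>A. (f i)\<^sup>2 * (g j)\<^sup>2) + (\<Sum>i\<in>A. \<Sum>j\<in>A. (f j)\<^sup>2 * (g i)\<^sup>2)
      - 2 * (\<Sum>i\<in>A. \<Sum>j\<in>A. (f i * g i) * (f j * g j))"
    by (simp add: sum_subtractf sum.distrib sum_distrib_left power2_eq_square algebra_simps)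
  also have "(\<Sum>i\<in>A. \<Sum>j\<in>A. (f i)\<^sup>2 * (g j)\<^sup>2) = (\<Sum>i\<in>A. (f i)\<^sup>2) * (\<Sum>i\<in>A. (g i)\<^sup>2)"
    by (simp add: sum_product)
  also have "(\<Sum>i\<in>A. \<Sum>j\<in>A. (f j)\<^sup>2 * (g i)\<^sup>2) = (\<Sum>i\<in>A. (f i)\<^sup>2) * (\<Sum>i\<in>A. (g i)\<^sup>2)"
    by (subst sum.swap) (simp add: sum_product)
  also have "(\<Sum>i\<in>A. \<Sum>j\<in>A. (f i * g i) * (f j * g j)) = (\<Sum>i\<in>A. f i * g i)\<^sup>2"
    by (simp add: sum_product power2_eq_square)
  finally show ?thesis by simp
qed

lemma cauchy_schwarz_complex: fixes u v :: "nat \<Rightarrow> complex" assumes "finite A"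
  shows "(cmod (\<Sum>i\<in>A. u i * v i))\<^sup>2 \<le> (\<Sum>i\<in>A. (cmod (u i))\<^sup>2) * (\<Sum>i\<in>A. (cmod (v i))\<^sup>2)"
proof -
  have "cmod (\<Sum>i\<in>A. u i * v i) \<le> (\<Sum>i\<in>A. cmod (u i) * cmod (v i))"
    by (rule order_trans[OF norm_sum]) (simp add: norm_mult)
  then have "(cmod (\<Sum>i\<in>A. u i * v i))\<^sup>2 \<le> (\<Sum>i\<in>A. cmod (u i) * cmod (v i))\<^sup>2"
    by (intro power_mono) auto
  also have "\<dots> \<le> (\<Sum>i\<in>A. (cmod (u i))\<^sup>2) * (\<Sum>i\<in>A. (cmod (v i))\<^sup>2)"
    by (rule cauchy_schwarz_real[OF assms])
  finally show ?thesis .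
qed

lemma sum_sqrt_mult_le: fixes a b :: "nat \<Rightarrow> real"
  assumes "finite A" "\<And>i. i \<in> A \<Longrightarrow> a i \<ge> 0" "\<And>i. i \<in> A \<Longrightarrow> b i \<ge> 0"
  shows "(\<Sum>i\<in>A. sqrt (a i * b i)) \<le> sqrt (sum a A) * sqrt (sum b A)"
proof -
  have "(\<Sum>i\<in>A. sqrt (a i) * sqrt (b i))\<^sup>2 \<le> (\<Sum>i\<in>A. (sqrt (a i))\<^sup>2) * (\<Sum>i\<in>A. (sqrt (b i))\<^sup>2)"
    by (rule cauchy_schwarz_real[OF assms(1)])
  also have "\<dots> = sum a A * sum b A" using assms by simp
  finally have "(\<Sum>i\<in>A. sqrt (a i * b i))\<^sup>2 \<le> sum a A * sum b A" by (simp add: real_sqrt_mult)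
  then have "sqrt ((\<Sum>i\<in>A. sqrt (a i * b i))\<^sup>2) \<le> sqrt (sum a A * sum b A)"
    using real_sqrt_le_mono by blast
  moreover have "(\<Sum>i\<in>A. sqrt (a i * b i)) \<ge> 0"
    using assms by (intro sum_nonneg real_sqrt_ge_zero mult_nonneg_nonneg) auto
  ultimately show ?thesis by (simp add: real_sqrt_mult)
qed

lemma bathtub:
  fixes mu p :: "nat \<Rightarrow> real"
  assumes LM: "1 \<le> L" "L \<le> M"
    and sorted: "\<And>i j. i \<le> j \<Longrightarrow> j < M \<Longrightarrow> mu j \<le> mu i"
    and pos: "\<And>l. l < L \<Longrightarrow> mu l > 0"
    and p0: "\<And>i. i < M \<Longrightarrow> p i \<ge> 0" and p1: "\<And>i. i < M \<Longrightarrow> p i \<le> 1"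
    and psum: "(\<Sum>i<M. p i) = real L"
    and pz: "\<And>i. i < M \<Longrightarrow> mu i \<le> 0 \<Longrightarrow> p i = 0"
  shows "(\<Sum>l<L. 1 / sqrt (mu l)) \<le> (\<Sum>i<M. p i * (1 / sqrt (mu i)))"
proof -
  define t where "t = 1 / sqrt (mu (L - 1))"
  have muL: "mu (L - 1) > 0" using pos LM by simp
  have rearrange: "c + (q - 1) * t \<le> q * c" if "(1 - q) * c \<le> (1 - q) * t" for q c :: real
    using that by (simp add: left_diff_distrib)
  have head: "1 / sqrt (mu i) + (p i - 1) * t \<le> p i * (1 / sqrt (mu i))" if "i < L" for i
  proof -
    have "mu (L - 1) \<le> mu i" using sorted[of i "L - 1"] that LM by simp
    then have "1 / sqrt (mu i) \<le> t" unfolding t_def using muL by (simp add: frac_le)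
    then have "(1 - p i) * (1 / sqrt (mu i)) \<le> (1 - p i) * t"
      using p1[of i] that LM by (intro mult_left_mono) auto
    then show ?thesis by (rule rearrange)
  qed
  have tail: "p i * t \<le> p i * (1 / sqrt (mu i))" if "L \<le> i" "i < M" for i
  proof (cases "mu i \<le> 0")
    case True then show ?thesis using pz that by simp
  next
    case False
    have "mu i \<le> mu (L - 1)" using sorted[of "L - 1" i] that LM by simp
    then have "t \<le> 1 / sqrt (mu i)" unfolding t_def using False by (simp add: frac_le)
    then show ?thesis using p0[OF that(2)] by (rule mult_left_mono)
  qed
  have split: "{..<M} = {..<L} \<union> {L..<M}" using LM by auto
  have mass: "(\<Sum>i<L. p i) + (\<Sum>i\<in>{L..<M}. p i) = real L"
  proof -
    have "(\<Sum>i<M. p i) = (\<Sum>i<L. p i) + (\<Sum>i\<in>{L..<M}. p i)"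
      unfolding split by (rule sum.union_disjoint) auto
    then show ?thesis using psum by simp
  qed
  have "(\<Sum>i<L. 1 / sqrt (mu i) + (p i - 1) * t) + (\<Sum>i\<in>{L..<M}. p i * t)
      = (\<Sum>l<L. 1 / sqrt (mu l)) + t * ((\<Sum>i<L. p i) + (\<Sum>i\<in>{L..<M}. p i) - real L)"
    by (simp add: sum.distrib sum_subtractf sum_distrib_left algebra_simps)
  then have "(\<Sum>l<L. 1 / sqrt (mu l)) = (\<Sum>i<L. 1 / sqrt (mu i) + (p i - 1) * t) + (\<Sum>i\<in>{L..<M}. p i * t)"
    unfolding mass by simp
  also have "\<dots> \<le> (\<Sum>i<L. p i * (1 / sqrt (mu i))) + (\<Sum>i\<in>{L..<M}. p i * (1 / sqrt (mu i)))"
    by (intro add_mono sum_mono) (use head tail in auto)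
  also have "\<dots> = (\<Sum>i<M. p i * (1 / sqrt (mu i)))"
    unfolding split by (rule sum.union_disjoint[symmetric]) auto
  finally show ?thesis .
qed

subsection \<open>The projection argument\<close>

text \<open>Entrywise setting: \<open>x\<close> are the entries of an \<open>M \<times> L\<close> matrix \<open>X\<close>, \<open>\<mu> \<ge> 0\<close> a
  diagonal weight, and \<open>k\<close> the entries of the (Hermitian) inverse \<open>K\<close> of the
  weighted Gram matrix \<open>G = X\<^sup>H diag \<mu> X\<close>.\<close>
locale gram_inverse =
  fixes x :: "nat \<Rightarrow> nat \<Rightarrow> complex" and k :: "nat \<Rightarrow> nat \<Rightarrow> complex"
    and mu :: "nat \<Rightarrow> real" and L M :: nat
  assumes left_inverse: "\<And>a b. a < L \<Longrightarrow> b < L \<Longrightarrow>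
      (\<Sum>l<L. k a l * (\<Sum>i<M. of_real (mu i) * cnj (x i l) * x i b)) = (if a = b then 1 else 0)"
  and right_inverse: "\<And>c l. c < L \<Longrightarrow> l < L \<Longrightarrow>
      (\<Sum>b<L. (\<Sum>i<M. of_real (mu i) * cnj (x i c) * x i b) * k b l) = (if c = l then 1 else 0)"
  and k_hermitian: "\<And>a b. a < L \<Longrightarrow> b < L \<Longrightarrow> k b a = cnj (k a b)"
  and mu_nonneg: "\<And>i. i < M \<Longrightarrow> mu i \<ge> 0"
begin

text \<open>\<open>gram_entry c b = G\<^sub>c\<^sub>b\<close>, \<open>kx i a = (K X\<^sup>H)\<^sub>a\<^sub>i\<close> and \<open>xkx i j = (X K X\<^sup>H)\<^sub>j\<^sub>i\<close>; the matrix
  \<open>diag \<mu>\<^sup>1\<^sup>/\<^sup>2 X K X\<^sup>H diag \<mu>\<^sup>1\<^sup>/\<^sup>2\<close> is an orthogonal projection of rank \<open>L\<close> and \<open>lev i\<close>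
  is its \<open>i\<close>-th diagonal entry (a "leverage score").  \<open>row_sq\<close> and \<open>inv_sq\<close>
  split \<open>tr (X\<^sup>H X)\<close> and \<open>tr K\<close> into contributions of the rows of \<open>X\<close>.\<close>
definition gram_entry where "gram_entry c b = (\<Sum>j<M. of_real (mu j) * cnj (x j c) * x j b)"
definition kx where "kx i a = (\<Sum>l<L. k a l * cnj (x i l))"
definition xkx where "xkx i j = (\<Sum>b<L. x j b * kx i b)"
definition quad where "quad i = (\<Sum>j<M. mu j * (cmod (xkx i j))\<^sup>2)"
definition lev where "lev i = mu i * quad i"
definition row_sq where "row_sq i = (\<Sum>a<L. (cmod (x i a))\<^sup>2)"
definition inv_sq where "inv_sq i = mu i * (\<Sum>a<L. (cmod (kx i a))\<^sup>2)"

lemma kx_inverse: assumes "a < L" "b < L"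
  shows "(\<Sum>i<M. of_real (mu i) * kx i a * x i b) = (if a = b then 1 else 0)"
proof -
  have "(\<Sum>i<M. of_real (mu i) * kx i a * x i b)
     = (\<Sum>l<L. \<Sum>i<M. k a l * (of_real (mu i) * cnj (x i l) * x i b))"
    by (subst sum.swap) (simp add: kx_def sum_distrib_left sum_distrib_right mult_ac)
  also have "\<dots> = (\<Sum>l<L. k a l * (\<Sum>i<M. of_real (mu i) * cnj (x i l) * x i b))"
    by (simp add: sum_distrib_left)
  finally show ?thesis using left_inverse[OF assms] by simp
qed

text \<open>The trace of the projection is \<open>L\<close>.\<close>
lemma sum_xkx_diag: "(\<Sum>i<M. of_real (mu i) * xkx i i) = of_nat L"
proof -
  have "(\<Sum>i<M. of_real (mu i) * xkx i i) = (\<Sum>a<L. \<Sum>i<M. of_real (mu i) * kx i a * x i a)"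
    by (subst sum.swap) (simp add: xkx_def sum_distrib_left mult_ac)
  also have "\<dots> = (\<Sum>a<L. 1)" by (rule sum.cong) (simp_all add: kx_inverse)
  finally show ?thesis by simp
qed

lemma gram_kx: assumes "c < L"
  shows "(\<Sum>b<L. gram_entry c b * kx i b) = cnj (x i c)"
proof -
  have "(\<Sum>b<L. gram_entry c b * kx i b) = (\<Sum>b<L. \<Sum>l<L. (gram_entry c b * k b l) * cnj (x i l))"
    by (simp add: kx_def sum_distrib_left mult_ac)
  also have "\<dots> = (\<Sum>l<L. (\<Sum>b<L. gram_entry c b * k b l) * cnj (x i l))"
    by (subst sum.swap) (simp add: sum_distrib_right)
  also have "\<dots> = (\<Sum>l<L. (if c = l then 1 else 0) * cnj (x i l))"
    by (rule sum.cong) (simp_all add: gram_entry_def right_inverse[OF assms])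
  also have "\<dots> = cnj (x i c)" using assms by (simp add: if_distrib[of "\<lambda>t. t * _"] cong: if_cong)
  finally show ?thesis .
qed

text \<open>Idempotence of the projection: its diagonal entry equals the squared norm of
  its column, \<open>(X K X\<^sup>H)\<^sub>i\<^sub>i = \<Sum>j. \<mu> j |(X K X\<^sup>H)\<^sub>j\<^sub>i|\<^sup>2\<close>.\<close>
lemma xkx_diag_quad: "xkx i i = of_real (quad i)"
proof -
  have "cnj (xkx i i) = (\<Sum>c<L. cnj (kx i c) * cnj (x i c))" by (simp add: xkx_def mult.commute)
  also have "\<dots> = (\<Sum>c<L. cnj (kx i c) * (\<Sum>b<L. gram_entry c b * kx i b))"
    by (rule sum.cong) (simp_all add: gram_kx)
  also have "\<dots> = (\<Sum>c<L. \<Sum>b<L. \<Sum>j<M. of_real (mu j) * (cnj (x j c * kx i c) * (x j b * kx i b)))"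
    by (simp add: gram_entry_def sum_distrib_left sum_distrib_right mult_ac)
  also have "\<dots> = (\<Sum>j<M. \<Sum>c<L. \<Sum>b<L. of_real (mu j) * (cnj (x j c * kx i c) * (x j b * kx i b)))"
    by (subst sum.swap, rule sum.cong[OF refl], rule sum.swap)
  also have "\<dots> = (\<Sum>j<M. of_real (mu j) * (cnj (xkx i j) * xkx i j))"
    by (simp add: xkx_def sum_distrib_left sum_distrib_right mult_ac)
  also have "\<dots> = of_real (quad i)"
    by (simp add: quad_def cnj_square mult.commute)
  finally have "cnj (xkx i i) = of_real (quad i)" .
  then show ?thesis by (metis complex_cnj_cnj complex_cnj_complex_of_real)
qed

lemma quad_nonneg: "quad i \<ge> 0"
  unfolding quad_def by (intro sum_nonneg mult_nonneg_nonneg) (auto simp: mu_nonneg)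

lemma lev_nonneg: "i < M \<Longrightarrow> lev i \<ge> 0"
  unfolding lev_def using quad_nonneg mu_nonneg by simp

lemma lev_sum: "(\<Sum>i<M. lev i) = real L"
proof -
  have "complex_of_real (\<Sum>i<M. lev i) = (\<Sum>i<M. of_real (mu i) * xkx i i)"
    by (simp add: lev_def xkx_diag_quad)
  also have "\<dots> = of_nat L" by (rule sum_xkx_diag)
  finally show ?thesis by (metis of_real_eq_iff of_real_of_nat_eq)
qed

text \<open>Diagonal entries of an orthogonal projection are at most one.\<close>
lemma lev_le_one: assumes i: "i < M" shows "lev i \<le> 1"
proof (cases "quad i = 0")
  case True then show ?thesis by (simp add: lev_def)
next
  case False
  have "mu i * (cmod (xkx i i))\<^sup>2 \<le> quad i"
    unfolding quad_def by (rule member_le_sum) (use i mu_nonneg in auto)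
  then have "mu i * (quad i)\<^sup>2 \<le> quad i" using xkx_diag_quad quad_nonneg by simp
  moreover have "quad i > 0" using False quad_nonneg[of i] by simp
  ultimately show ?thesis by (simp add: lev_def power2_eq_square)
qed

text \<open>Cauchy-Schwarz for \<open>(X K X\<^sup>H)\<^sub>i\<^sub>i = \<langle>x\<^sub>i, K x\<^sub>i\<rangle>\<close>.\<close>
lemma lev_sq_bound: assumes i: "i < M" shows "(lev i)\<^sup>2 \<le> mu i * row_sq i * inv_sq i"
proof -
  have "(cmod (xkx i i))\<^sup>2 \<le> row_sq i * (\<Sum>a<L. (cmod (kx i a))\<^sup>2)"
    unfolding xkx_def row_sq_def by (rule cauchy_schwarz_complex) simp
  then have "(quad i)\<^sup>2 \<le> row_sq i * (\<Sum>a<L. (cmod (kx i a))\<^sup>2)"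
    using xkx_diag_quad quad_nonneg by simp
  then have "(mu i)\<^sup>2 * (quad i)\<^sup>2 \<le> (mu i)\<^sup>2 * (row_sq i * (\<Sum>a<L. (cmod (kx i a))\<^sup>2))"
    by (intro mult_left_mono) auto
  then show ?thesis by (simp add: lev_def inv_sq_def power_mult_distrib power2_eq_square mult_ac)
qed

lemma row_sq_nonneg: "row_sq i \<ge> 0" unfolding row_sq_def by (intro sum_nonneg) auto

lemma inv_sq_nonneg: "i < M \<Longrightarrow> inv_sq i \<ge> 0"
  unfolding inv_sq_def using mu_nonneg by (intro mult_nonneg_nonneg sum_nonneg) auto

text \<open>\<open>\<Sum>i. inv_sq i = tr (K G K) = tr K\<close>.\<close>
lemma inv_sq_sum: "complex_of_real (\<Sum>i<M. inv_sq i) = (\<Sum>a<L. k a a)"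
proof -
  have cnj_kx: "cnj (kx i a) = (\<Sum>l<L. k l a * x i l)" if a: "a < L" for i a
    unfolding kx_def by (simp add: k_hermitian[OF a] mult.commute)
  have "complex_of_real (\<Sum>i<M. inv_sq i) = (\<Sum>i<M. \<Sum>a<L. of_real (mu i) * (kx i a * cnj (kx i a)))"
    by (simp add: inv_sq_def sum_distrib_left cnj_square)
  also have "\<dots> = (\<Sum>a<L. \<Sum>i<M. of_real (mu i) * (kx i a * cnj (kx i a)))" by (rule sum.swap)
  also have "\<dots> = (\<Sum>a<L. \<Sum>i<M. \<Sum>l<L. k l a * (of_real (mu i) * kx i a * x i l))"
    by (rule sum.cong) (simp_all add: cnj_kx sum_distrib_left mult_ac)
  also have "\<dots> = (\<Sum>a<L. \<Sum>l<L. k l a * (\<Sum>i<M. of_real (mu i) * kx i a * x i l))"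
    by (rule sum.cong[OF refl], subst sum.swap) (simp add: sum_distrib_left)
  also have "\<dots> = (\<Sum>a<L. \<Sum>l<L. k l a * (if a = l then 1 else 0))"
    by (intro sum.cong refl) (simp add: kx_inverse)
  also have "\<dots> = (\<Sum>a<L. k a a)"
    by (rule sum.cong) (simp_all add: if_distrib[of "\<lambda>t. _ * t"] cong: if_cong)
  finally show ?thesis .
qed

end

context gram_inverse
begin

lemma lev_zero: "i < M \<Longrightarrow> mu i \<le> 0 \<Longrightarrow> lev i = 0"
  using mu_nonneg[of i] by (simp add: lev_def)

lemma lev_div_sqrt_le: assumes i: "i < M"
  shows "lev i * (1 / sqrt (mu i)) \<le> sqrt (row_sq i * inv_sq i)"
proof (cases "mu i = 0")
  case True then show ?thesis using row_sq_nonneg[of i] inv_sq_nonneg[OF i] by simp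
next
  case False
  then have mp: "mu i > 0" using mu_nonneg[OF i] by simp
  have "(lev i)\<^sup>2 / mu i \<le> row_sq i * inv_sq i"
    using lev_sq_bound[OF i] mp by (simp add: divide_le_eq mult_ac)
  then have "sqrt ((lev i)\<^sup>2 / mu i) \<le> sqrt (row_sq i * inv_sq i)" by simp
  moreover have "sqrt ((lev i)\<^sup>2 / mu i) = lev i * (1 / sqrt (mu i))"
    using lev_nonneg[OF i] mp by (simp add: real_sqrt_divide)
  ultimately show ?thesis by simp
qed

text \<open>The core inequality, in terms of the row contributions to \<open>tr (X\<^sup>H X)\<close> and
  \<open>tr K\<close>: bathtub principle for the leverage scores, then Cauchy-Schwarz twice.\<close>
lemma leverage_bound:
  assumes LM: "1 \<le> L" "L \<le> M"
    and sorted: "\<And>i j. i \<le> j \<Longrightarrow> j < M \<Longrightarrow> mu j \<le> mu i"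
    and pos: "\<And>l. l < L \<Longrightarrow> mu l > 0"
  shows "(\<Sum>l<L. 1 / sqrt (mu l))\<^sup>2 \<le> (\<Sum>i<M. row_sq i) * (\<Sum>i<M. inv_sq i)"
proof -
  have "(\<Sum>l<L. 1 / sqrt (mu l)) \<le> (\<Sum>i<M. lev i * (1 / sqrt (mu i)))"
    by (rule bathtub[OF LM sorted pos lev_nonneg lev_le_one lev_sum lev_zero])
  also have "\<dots> \<le> (\<Sum>i<M. sqrt (row_sq i * inv_sq i))"
    by (intro sum_mono lev_div_sqrt_le) simp
  also have "\<dots> \<le> sqrt (\<Sum>i<M. row_sq i) * sqrt (\<Sum>i<M. inv_sq i)"
    by (rule sum_sqrt_mult_le) (auto simp: row_sq_nonneg inv_sq_nonneg)
  finally have bound: "(\<Sum>l<L. 1 / sqrt (mu l)) \<le> sqrt (\<Sum>i<M. row_sq i) * sqrt (\<Sum>i<M. inv_sq i)" .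
  have "0 \<le> (\<Sum>l<L. 1 / sqrt (mu l))" using pos by (intro sum_nonneg) (simp add: less_imp_le)
  then have "(\<Sum>l<L. 1 / sqrt (mu l))\<^sup>2 \<le> (sqrt (\<Sum>i<M. row_sq i) * sqrt (\<Sum>i<M. inv_sq i))\<^sup>2"
    using bound by (intro power_mono) auto
  also have "\<dots> = (\<Sum>i<M. row_sq i) * (\<Sum>i<M. inv_sq i)"
    using sum_nonneg[of "{..<M}" row_sq] sum_nonneg[of "{..<M}" inv_sq]
    by (simp add: power_mult_distrib row_sq_nonneg inv_sq_nonneg)
  finally show ?thesis .
qed

end

subsection \<open>The trace inequality\<close>

lemma diag_congruence_entry: fixes X :: "complex mat"
  assumes X: "X \<in> carrier_mat M L" and a: "a < L" and b: "b < L"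
  shows "(mat_adjoint X * mat_diag M c * X) $$ (a,b) = (\<Sum>i<M. c i * cnj (X $$ (i,a)) * X $$ (i,b))"
proof -
  have "mat_adjoint X * mat_diag M c = mat L M (\<lambda>(i,j). mat_adjoint X $$ (i,j) * c j)"
    by (rule mat_diag_mult_right) (use X in simp)
  then show ?thesis using X a b by (simp add: scalar_prod_def lessThan_atLeast0 mult_ac)
qed

lemma trace_adjoint_mult: fixes X :: "complex mat"
  assumes X: "X \<in> carrier_mat M L"
  shows "mtrace (mat_adjoint X * X) = of_real (\<Sum>i<M. \<Sum>a<L. (cmod (X $$ (i,a)))\<^sup>2)"
proof -
  have "mtrace (mat_adjoint X * X) = (\<Sum>a<L. (mat_adjoint X * 1\<^sub>m M * X) $$ (a,a))"
    unfolding mtrace_def using X right_mult_one_mat[OF adjoint_carrier[OF X]] by simp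
  also have "\<dots> = (\<Sum>a<L. \<Sum>i<M. cnj (X $$ (i,a)) * X $$ (i,a))"
    by (rule sum.cong)
       (simp_all add: diag_congruence_entry[OF X, of _ _ "\<lambda>_. 1", unfolded mat_diag_one])
  also have "\<dots> = of_real (\<Sum>i<M. \<Sum>a<L. (cmod (X $$ (i,a)))\<^sup>2)"
    by (subst sum.swap) (simp add: cnj_square mult.commute)
  finally show ?thesis .
qed

lemma gram_spectrum_nonneg: fixes H V :: "complex mat"
  assumes H: "H \<in> carrier_mat NR M" and V: "V \<in> carrier_mat M M"
    and VD: "mat_adjoint V * (mat_adjoint H * H) * V = mat_diag M (\<lambda>i. complex_of_real (mu i))"
    and i: "i < M"
  shows "mu i \<ge> 0"
proof -
  have HV: "H * V \<in> carrier_mat NR M" using H V by simp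
  have "mat_adjoint (H * V) * (H * V) = mat_adjoint (H * V) * 1\<^sub>m NR * (H * V)"
    using right_mult_one_mat[OF adjoint_carrier[OF HV]] by simp
  also have "\<dots> = mat_adjoint V * (mat_adjoint H * H) * V"
    using adjoint_sandwich[OF H V one_carrier_mat] right_mult_one_mat[OF adjoint_carrier[OF H]] by simp
  finally have "complex_of_real (mu i) = (mat_adjoint (H * V) * (H * V)) $$ (i,i)"
    using VD i by (simp add: mat_diag_def)
  also have "\<dots> = col (H * V) i \<bullet>c col (H * V) i" by (rule adjoint_mult_index[OF HV HV i i])
  finally have "mu i = Re (col (H * V) i \<bullet>c col (H * V) i)" by (metis Re_complex_of_real)
  then show ?thesis using cinner_self_real(2) by simp
qed

lemma trace_inequality:
  fixes H V U :: "complex mat" and mu :: "nat \<Rightarrow> real"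
  assumes H: "H \<in> carrier_mat NR M" and V: "V \<in> carrier_mat M M" and VV: "V * mat_adjoint V = 1\<^sub>m M"
    and VD: "mat_adjoint V * (mat_adjoint H * H) * V = mat_diag M (\<lambda>i. complex_of_real (mu i))"
    and LM: "1 \<le> L" "L \<le> M"
    and sorted: "\<And>i j. i \<le> j \<Longrightarrow> j < M \<Longrightarrow> mu j \<le> mu i"
    and pos: "\<And>l. l < L \<Longrightarrow> mu l > 0"
    and U: "U \<in> carrier_mat M L" and inv: "invertible_mat (gram H U)"
  shows "(\<Sum>l<L. 1 / sqrt (mu l))\<^sup>2 \<le> Re (mtrace (mat_adjoint U * U)) * Re (\<Sum>l<L. minv (gram H U) $$ (l,l))"
proof -
  define A where "A = mat_adjoint H * H"
  have A: "A \<in> carrier_mat M M" unfolding A_def using mult_carrier_mat[OF adjoint_carrier[OF H] H] .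
  have hA: "mat_adjoint A = A" unfolding A_def using adjoint_mult[OF adjoint_carrier[OF H] H] by simp
  define X where "X = mat_adjoint V * U"
  have X: "X \<in> carrier_mat M L" unfolding X_def using mult_carrier_mat[OF adjoint_carrier[OF V] U] .
  have gA: "gram H U = mat_adjoint U * A * U"
    unfolding gram_def A_def using assoc_mult_mat[OF adjoint_carrier[OF U] adjoint_carrier[OF H] H] by simp
  have G: "gram H U \<in> carrier_mat L L"
    unfolding gA using mult_carrier_mat[OF mult_carrier_mat[OF adjoint_carrier[OF U] A] U] .
  define K where "K = minv (gram H U)"
  have GK: "gram H U * K = 1\<^sub>m L" and KG: "K * gram H U = 1\<^sub>m L" and K: "K \<in> carrier_mat L L"
    using minv_invertible[OF G inv] unfolding K_def by auto
  have hK: "mat_adjoint K = K"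
    by (rule inverse_hermitian[OF G K _ GK]) (use congruence_hermitian[OF A U hA] gA in simp)
  have Gent: "gram H U $$ (a,b) = (\<Sum>i<M. complex_of_real (mu i) * cnj (X $$ (i,a)) * X $$ (i,b))"
    if "a < L" "b < L" for a b
    unfolding gA unitary_change_of_coordinates[OF A V VV VD[folded A_def] U] X_def[symmetric]
    by (rule diag_congruence_entry[OF X that])
  have prod_entry: "(P * Q) $$ (a,b) = (\<Sum>l<L. P $$ (a,l) * Q $$ (l,b))"
    if "P \<in> carrier_mat L L" "Q \<in> carrier_mat L L" "a < L" "b < L" for P Q :: "complex mat" and a b
    using that by (simp add: scalar_prod_def lessThan_atLeast0)
  interpret gi: gram_inverse "\<lambda>i a. X $$ (i,a)" "\<lambda>a b. K $$ (a,b)" mu L M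
  proof
    fix a b assume a: "a < L" and b: "b < L"
    show "(\<Sum>l<L. K $$ (a,l) * (\<Sum>i<M. complex_of_real (mu i) * cnj (X $$ (i,l)) * X $$ (i,b)))
        = (if a = b then 1 else 0)"
      using prod_entry[OF K G a b] Gent b KG a by simp
    show "(\<Sum>l<L. (\<Sum>i<M. complex_of_real (mu i) * cnj (X $$ (i,a)) * X $$ (i,l)) * K $$ (l,b))
        = (if a = b then 1 else 0)"
      using prod_entry[OF G K a b] Gent a GK b by simp
    show "K $$ (b,a) = cnj (K $$ (a,b))"
      using hK K a b adjoint_index[of b K a] by simp
  next
    fix i assume "i < M" then show "mu i \<ge> 0" by (rule gram_spectrum_nonneg[OF H V VD])
  qed
  have "mat_adjoint U * U = mat_adjoint X * X"
    using unitary_change_of_coordinates[OF one_carrier_mat V VV _ U, of "1\<^sub>m M"]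
      mat_mult_left_right_inverse[OF V adjoint_carrier[OF V] VV]
      right_mult_one_mat[OF adjoint_carrier[OF U]] right_mult_one_mat[OF adjoint_carrier[OF X]]
      right_mult_one_mat[OF adjoint_carrier[OF V]]
    by (simp add: X_def)
  then have trU: "Re (mtrace (mat_adjoint U * U)) = (\<Sum>i<M. gi.row_sq i)"
    using trace_adjoint_mult[OF X] unfolding gi.row_sq_def by simp
  have trK: "Re (\<Sum>l<L. minv (gram H U) $$ (l,l)) = (\<Sum>i<M. gi.inv_sq i)"
    using arg_cong[OF gi.inv_sq_sum, of Re] unfolding K_def by simp
  show ?thesis unfolding trU trK by (rule gi.leverage_bound[OF LM sorted pos])
qed

lemma eigencols_diag: fixes A V1 :: "complex mat"
  assumes A: "A \<in> carrier_mat M M" and V1: "V1 \<in> carrier_mat M L" and VV: "mat_adjoint V1 * V1 = 1\<^sub>m L"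
    and ev: "\<forall>l<L. A *\<^sub>v col V1 l = complex_of_real (h l) \<cdot>\<^sub>v col V1 l"
  shows "mat_adjoint V1 * A * V1 = mat_diag L (\<lambda>l. complex_of_real (h l))"
proof -
  have AV: "A * V1 \<in> carrier_mat M L" using A V1 by simp
  have e: "mat_adjoint V1 * A * V1 = mat_adjoint V1 * (A * V1)"
    by (rule assoc_mult_mat[OF adjoint_carrier[OF V1] A V1])
  show ?thesis unfolding e
  proof (rule eq_matI)
    fix a b assume "a < dim_row (mat_diag L (\<lambda>l. complex_of_real (h l)))"
      "b < dim_col (mat_diag L (\<lambda>l. complex_of_real (h l)))"
    then have a: "a < L" and b: "b < L" by (auto simp: mat_diag_def)
    have "(mat_adjoint V1 * (A * V1)) $$ (a,b) = col (A * V1) b \<bullet>c col V1 a"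
      by (rule adjoint_mult_index[OF V1 AV a b])
    also have "col (A * V1) b = complex_of_real (h b) \<cdot>\<^sub>v col V1 b"
      using ev b by (simp only: col_mult2[OF A V1 b])
    also have "(complex_of_real (h b) \<cdot>\<^sub>v col V1 b) \<bullet>c col V1 a = complex_of_real (h b) * (col V1 b \<bullet>c col V1 a)"
      using V1 a b by (simp add: scalar_prod_def sum_distrib_left mult.assoc)
    also have "col V1 b \<bullet>c col V1 a = (mat_adjoint V1 * V1) $$ (a,b)"
      by (rule adjoint_mult_index[OF V1 V1 a b, symmetric])
    finally show "(mat_adjoint V1 * (A * V1)) $$ (a,b) = mat_diag L (\<lambda>l. complex_of_real (h l)) $$ (a,b)"
      using VV a b by (simp add: mat_diag_def)
  qed (use V1 AV in \<open>auto simp: mat_diag_def\<close>)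
qed

lemma unitary_conj_mult: fixes S D E :: "complex mat"
  assumes S: "S \<in> carrier_mat L L" and SS: "mat_adjoint S * S = 1\<^sub>m L"
    and D: "D \<in> carrier_mat L L" and E: "E \<in> carrier_mat L L"
  shows "(S * D * mat_adjoint S) * (S * E * mat_adjoint S) = S * (D * E) * mat_adjoint S"
proof -
  have aS: "mat_adjoint S \<in> carrier_mat L L" using S by simp
  have SD: "S * D \<in> carrier_mat L L" using S D by simp
  have SE: "S * E \<in> carrier_mat L L" using S E by simp
  have "(S * D * mat_adjoint S) * (S * E * mat_adjoint S) = (S * D) * (mat_adjoint S * ((S * E) * mat_adjoint S))"
    using assoc_mult_mat[OF SD aS mult_carrier_mat[OF SE aS]] .
  also have "mat_adjoint S * ((S * E) * mat_adjoint S) = (mat_adjoint S * (S * E)) * mat_adjoint S"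
    using assoc_mult_mat[OF aS SE aS] by simp
  also have "mat_adjoint S * (S * E) = (mat_adjoint S * S) * E" using assoc_mult_mat[OF aS S E] by simp
  also have "\<dots> = E" using SS E by simp
  also have "(S * D) * (E * mat_adjoint S) = S * (D * (E * mat_adjoint S))"
    using assoc_mult_mat[OF S D mult_carrier_mat[OF E aS]] .
  also have "D * (E * mat_adjoint S) = (D * E) * mat_adjoint S" using assoc_mult_mat[OF D E aS] by simp
  also have "S * ((D * E) * mat_adjoint S) = S * (D * E) * mat_adjoint S"
    using assoc_mult_mat[OF S mult_carrier_mat[OF D E] aS] by simp
  finally show ?thesis .
qed

lemma unitary_conj_diag_entry: fixes S :: "complex mat"
  assumes S: "S \<in> carrier_mat L L" and l: "l < L"
  shows "(S * mat_diag L d * mat_adjoint S) $$ (l,l) = (\<Sum>k<L. d k * complex_of_real ((cmod (S $$ (l,k)))\<^sup>2))"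
proof -
  have "S * mat_diag L d = mat L L (\<lambda>(i,j). S $$ (i,j) * d j)" by (rule mat_diag_mult_right[OF S])
  then show ?thesis using S l by (simp add: scalar_prod_def lessThan_atLeast0 cnj_square mult_ac)
qed

lemma unitary_conj_diag_trace: fixes S :: "complex mat"
  assumes S: "S \<in> carrier_mat L L" and SS: "mat_adjoint S * S = 1\<^sub>m L"
  shows "(\<Sum>l<L. (S * mat_diag L d * mat_adjoint S) $$ (l,l)) = (\<Sum>k<L. d k)"
proof -
  have col_norm: "(\<Sum>l<L. complex_of_real ((cmod (S $$ (l,k)))\<^sup>2)) = 1" if k: "k < L" for k
  proof -
    have "(mat_adjoint S * S) $$ (k,k) = col S k \<bullet>c col S k" by (rule adjoint_mult_index[OF S S k k])
    also have "\<dots> = (\<Sum>l<L. complex_of_real ((cmod (S $$ (l,k)))\<^sup>2))"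
      using S k by (simp add: scalar_prod_def lessThan_atLeast0 cnj_square)
    finally show ?thesis using SS k by simp
  qed
  have "(\<Sum>l<L. (S * mat_diag L d * mat_adjoint S) $$ (l,l))
     = (\<Sum>k<L. d k * (\<Sum>l<L. complex_of_real ((cmod (S $$ (l,k)))\<^sup>2)))"
    by (simp add: unitary_conj_diag_entry[OF S] sum_distrib_left, subst sum.swap) (rule refl)
  also have "\<dots> = (\<Sum>k<L. d k)" by (rule sum.cong) (simp_all add: col_norm[unfolded of_real_power])
  finally show ?thesis .
qed

subsection \<open>The normalised DFT matrix\<close>

lemma dft_sum: assumes n: "n > 0" and a: "a < n" and b: "b < n" and ab: "a \<noteq> b"
  shows "(\<Sum>j<n. cis (2 * pi * real j * (real b - real a) / real n)) = 0"
proof -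
  define \<omega> where "\<omega> = cis (2 * pi * (real b - real a) / real n)"
  have w1: "\<omega> \<noteq> 1"
  proof
    assume "\<omega> = 1"
    then have "cos (2 * pi * (real b - real a) / real n) = 1" by (simp add: \<omega>_def complex_eq_iff)
    then obtain m :: int where m: "2 * pi * (real b - real a) / real n = real_of_int m * 2 * pi"
      by (subst (asm) cos_one_2pi_int) blast
    hence "real_of_int (int b - int a) = real_of_int (m * int n)"
      unfolding of_int_diff of_int_mult using n by (simp add: nonzero_divide_eq_eq)
    hence *: "int b - int a = m * int n" by (simp only: of_int_eq_iff)
    then have "abs m * int n = abs (int b - int a)" by (simp add: abs_mult)
    also have "\<dots> < int n" using a b by linarith
    finally have "m = 0" using n by (simp add: mult_less_cancel_right1)
    with * ab show False by simp
  qed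
  have "(\<Sum>j<n. cis (2 * pi * real j * (real b - real a) / real n)) = (\<Sum>j<n. \<omega> ^ j)"
    by (intro sum.cong refl) (auto simp: \<omega>_def DeMoivre mult_ac)
  also have "\<dots> = (\<omega> ^ n - 1) / (\<omega> - 1)" by (rule geometric_sum[OF w1])
  also have "\<omega> ^ n = cis (2 * pi * (real b - real a))" using n by (simp add: \<omega>_def DeMoivre)
  also have "\<dots> = 1" by (rule cis_multiple_2pi) simp
  finally show ?thesis by simp
qed

definition dft :: "nat \<Rightarrow> complex mat" where
  "dft n = mat n n (\<lambda>(j,k). complex_of_real (1 / sqrt (real n)) * cis (2 * pi * real j * real k / real n))"

lemma dft_unitary: assumes n: "n > 0" shows "unitary_mat n (dft n)"
proof -
  have Sc: "dft n \<in> carrier_mat n n" unfolding dft_def by simp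
  have entry: "cnj (dft n $$ (j,a)) * dft n $$ (j,b) =
      complex_of_real (1 / real n) * cis (2 * pi * real j * (real b - real a) / real n)"
    if "j < n" "a < n" "b < n" for j a b
  proof -
    have "cnj (dft n $$ (j,a)) * dft n $$ (j,b) =
      (complex_of_real (1 / sqrt (real n)) * complex_of_real (1 / sqrt (real n))) *
      (cis (- (2 * pi * real j * real a / real n)) * cis (2 * pi * real j * real b / real n))"
      unfolding dft_def using that by (simp add: cis_cnj mult_ac)
    also have "complex_of_real (1 / sqrt (real n)) * complex_of_real (1 / sqrt (real n)) = complex_of_real (1 / real n)"
      using n by (simp flip: of_real_mult)
    also have "cis (- (2 * pi * real j * real a / real n)) * cis (2 * pi * real j * real b / real n)
        = cis (2 * pi * real j * (real b - real a) / real n)"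
      by (simp add: cis_mult algebra_simps diff_divide_distrib)
    finally show ?thesis .
  qed
  have "mat_adjoint (dft n) * dft n = 1\<^sub>m n"
  proof (rule eq_matI)
    fix a b assume "a < dim_row (1\<^sub>m n :: complex mat)" "b < dim_col (1\<^sub>m n :: complex mat)"
    then have a: "a < n" and b: "b < n" by auto
    have "(mat_adjoint (dft n) * dft n) $$ (a,b)
        = complex_of_real (1 / real n) * (\<Sum>j<n. cis (2 * pi * real j * (real b - real a) / real n))"
      using Sc a b by (simp add: scalar_prod_def lessThan_atLeast0 entry sum_distrib_left)
    then show "(mat_adjoint (dft n) * dft n) $$ (a,b) = 1\<^sub>m n $$ (a,b)"
      using dft_sum[OF n a b] n a b by (cases "a = b") simp_all
  qed (use Sc in auto)
  then show ?thesis using Sc unfolding unitary_mat_def by simp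
qed

lemma dft_abs: assumes "j < n" "k < n" shows "(cmod (dft n $$ (j,k)))\<^sup>2 = 1 / real n"
  using assms unfolding dft_def by (simp add: norm_mult norm_divide power_divide)

subsection \<open>The water-filling precoder\<close>

lemma precoder_structure:
  fixes H V1 S U :: "complex mat" and d h :: "nat \<Rightarrow> real"
  assumes H: "H \<in> carrier_mat NR M"
    and V1: "V1 \<in> carrier_mat M L" and V1V1: "mat_adjoint V1 * V1 = 1\<^sub>m L"
    and V1_eig: "\<forall>l<L. (mat_adjoint H * H) *\<^sub>v col V1 l = complex_of_real (h l) \<cdot>\<^sub>v col V1 l"
    and S: "unitary_mat L S" and d: "\<forall>l<L. d l > 0" and h: "\<forall>l<L. h l > 0"
    and U: "U = V1 * mat_diag L (\<lambda>l. complex_of_real (sqrt (d l))) * mat_adjoint S"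
  shows "U \<in> carrier_mat M L" and "invertible_mat (gram H U)"
    and "minv (gram H U) = S * mat_diag L (\<lambda>l. complex_of_real (1 / (d l * h l))) * mat_adjoint S"
    and "mat_adjoint U * U = S * mat_diag L (\<lambda>l. complex_of_real (d l)) * mat_adjoint S"
proof -
  have Sc: "S \<in> carrier_mat L L" and SS: "mat_adjoint S * S = 1\<^sub>m L" using S unfolding unitary_mat_def by auto
  have aS: "mat_adjoint S \<in> carrier_mat L L" using Sc by simp
  have SS': "S * mat_adjoint S = 1\<^sub>m L" by (rule mat_mult_left_right_inverse[OF aS Sc SS])
  define Lam where "Lam = mat_diag L (\<lambda>l. complex_of_real (sqrt (d l)))"
  have Lam: "Lam \<in> carrier_mat L L" unfolding Lam_def by simp
  have VL: "V1 * Lam \<in> carrier_mat M L" using V1 Lam by simp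
  show Uc: "U \<in> carrier_mat M L" unfolding U Lam_def[symmetric] using mult_carrier_mat[OF VL aS] .
  have sandwich: "mat_adjoint U * B * U = S * (Lam * (mat_adjoint V1 * B * V1) * Lam) * mat_adjoint S"
    if B: "B \<in> carrier_mat M M" for B
  proof -
    have "mat_adjoint U * B * U
        = mat_adjoint (mat_adjoint S) * (mat_adjoint (V1 * Lam) * B * (V1 * Lam)) * mat_adjoint S"
      unfolding U Lam_def[symmetric] by (rule adjoint_sandwich[OF VL aS B])
    also have "mat_adjoint (V1 * Lam) * B * (V1 * Lam) = mat_adjoint Lam * (mat_adjoint V1 * B * V1) * Lam"
      by (rule adjoint_sandwich[OF V1 Lam B])
    finally show ?thesis unfolding Lam_def adjoint_diag_real by simp
  qed
  define D2 where "D2 = mat_diag L (\<lambda>l. complex_of_real (d l * h l))"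
  define Dinv where "Dinv = mat_diag L (\<lambda>l. complex_of_real (1 / (d l * h l)))"
  have D2: "D2 \<in> carrier_mat L L" and Dinv: "Dinv \<in> carrier_mat L L"
    unfolding D2_def Dinv_def by simp_all
  have A: "mat_adjoint H * H \<in> carrier_mat M M" using mult_carrier_mat[OF adjoint_carrier[OF H] H] .
  have g: "gram H U = S * D2 * mat_adjoint S"
  proof -
    have "gram H U = mat_adjoint U * (mat_adjoint H * H) * U"
      unfolding gram_def using assoc_mult_mat[OF adjoint_carrier[OF Uc] adjoint_carrier[OF H] H] by simp
    also have "\<dots> = S * D2 * mat_adjoint S"
      unfolding sandwich[OF A] eigencols_diag[OF A V1 V1V1 V1_eig] Lam_def D2_def mat_diag_diag
      by (rule arg_cong[where f = "\<lambda>X. S * X * mat_adjoint S"], rule eq_matI)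
         (auto simp: mat_diag_def d less_imp_le simp flip: of_real_mult)
    finally show ?thesis .
  qed
  have G: "gram H U \<in> carrier_mat L L" unfolding g using mult_carrier_mat[OF mult_carrier_mat[OF Sc D2] aS] .
  have K: "S * Dinv * mat_adjoint S \<in> carrier_mat L L" using mult_carrier_mat[OF mult_carrier_mat[OF Sc Dinv] aS] .
  have "D2 * Dinv = 1\<^sub>m L"
    unfolding D2_def Dinv_def mat_diag_diag mat_diag_one[symmetric, of L]
    using d h by (intro eq_matI) (auto simp: mat_diag_def simp flip: of_real_mult)
  then have GK: "gram H U * (S * Dinv * mat_adjoint S) = 1\<^sub>m L"
    unfolding g unitary_conj_mult[OF Sc SS D2 Dinv] using SS' right_mult_one_mat[OF Sc] by simp
  show "minv (gram H U) = S * Dinv * mat_adjoint S"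
    unfolding Dinv_def[symmetric] by (rule minv_unique[OF G K GK])
  show "invertible_mat (gram H U)"
    unfolding invertible_mat_def inverts_mat_def square_mat.simps
    using GK mat_mult_left_right_inverse[OF G K GK] G K
    by (intro conjI exI[of _ "S * Dinv * mat_adjoint S"]) auto
  have "mat_adjoint U * U = mat_adjoint U * 1\<^sub>m M * U"
    using right_mult_one_mat[OF adjoint_carrier[OF Uc]] by simp
  also have "\<dots> = S * (Lam * 1\<^sub>m L * Lam) * mat_adjoint S"
    unfolding sandwich[OF one_carrier_mat] using right_mult_one_mat[OF adjoint_carrier[OF V1]] V1V1 by simp
  also have "Lam * 1\<^sub>m L * Lam = mat_diag L (\<lambda>l. complex_of_real (d l))"
    unfolding Lam_def mat_diag_one[symmetric, of L] mat_diag_diag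
    using d by (intro eq_matI) (auto simp: mat_diag_def less_imp_le simp flip: of_real_mult)
  finally show "mat_adjoint U * U = S * mat_diag L (\<lambda>l. complex_of_real (d l)) * mat_adjoint S" .
qed

lemma precoder_feasible:
  fixes H V1 S U :: "complex mat" and d h :: "nat \<Rightarrow> real"
  assumes H: "H \<in> carrier_mat NR M"
    and V1: "V1 \<in> carrier_mat M L" "mat_adjoint V1 * V1 = 1\<^sub>m L"
    and V1_eig: "\<forall>l<L. (mat_adjoint H * H) *\<^sub>v col V1 l = complex_of_real (h l) \<cdot>\<^sub>v col V1 l"
    and S: "unitary_mat L S" and d: "\<forall>l<L. d l > 0" and h: "\<forall>l<L. h l > 0"
    and U: "U = V1 * mat_diag L (\<lambda>l. complex_of_real (sqrt (d l))) * mat_adjoint S"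
    and budget: "(\<Sum>l<L. \<sigma>2 / (d l * h l)) = \<gamma> / real n"
  shows "feasible \<sigma>2 \<gamma> n H M L U" and "mtrace (mat_adjoint U * U) = complex_of_real (\<Sum>l<L. d l)"
proof -
  note prec = precoder_structure[OF H V1 V1_eig S d h U]
  have Sc: "S \<in> carrier_mat L L" and SS: "mat_adjoint S * S = 1\<^sub>m L" using S unfolding unitary_mat_def by auto
  have "Re (\<Sum>l<L. complex_of_real \<sigma>2 * minv (gram H U) $$ (l, l))
      = \<sigma>2 * Re (\<Sum>l<L. minv (gram H U) $$ (l, l))"
    by (simp add: sum_distrib_left[symmetric])
  also have "\<dots> = \<gamma> / real n"
    unfolding prec(3) unitary_conj_diag_trace[OF Sc SS] budget[symmetric]
    by (simp add: sum_distrib_left)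
  finally show "feasible \<sigma>2 \<gamma> n H M L U"
    unfolding feasible_def using prec(1,2) by simp
  have "dim_row (mat_adjoint U * U) = L" using prec(1) by simp
  then show "mtrace (mat_adjoint U * U) = complex_of_real (\<Sum>l<L. d l)"
    unfolding mtrace_def by (simp only: prec(4) unitary_conj_diag_trace[OF Sc SS] of_real_sum)
qed

lemma dft_precoder_equal_mse:
  fixes H V1 U :: "complex mat" and d h :: "nat \<Rightarrow> real"
  assumes H: "H \<in> carrier_mat NR M"
    and V1: "V1 \<in> carrier_mat M L" "mat_adjoint V1 * V1 = 1\<^sub>m L"
    and V1_eig: "\<forall>l<L. (mat_adjoint H * H) *\<^sub>v col V1 l = complex_of_real (h l) \<cdot>\<^sub>v col V1 l"
    and L: "L > 0" and d: "\<forall>l<L. d l > 0" and h: "\<forall>l<L. h l > 0"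
    and U: "U = V1 * mat_diag L (\<lambda>l. complex_of_real (sqrt (d l))) * mat_adjoint (dft L)"
    and budget: "(\<Sum>l<L. \<sigma>2 / (d l * h l)) = \<gamma> / real n"
    and l: "l < L"
  shows "complex_of_real \<sigma>2 * minv (gram H U) $$ (l, l) = complex_of_real ((1 / real L) * (\<gamma> / real n))"
proof -
  have S: "dft L \<in> carrier_mat L L" using dft_unitary[OF L] unfolding unitary_mat_def by simp
  have "minv (gram H U) $$ (l,l)
      = (\<Sum>k<L. complex_of_real (1 / (d k * h k)) * complex_of_real ((cmod (dft L $$ (l,k)))\<^sup>2))"
    unfolding precoder_structure(3)[OF H V1 V1_eig dft_unitary[OF L] d h U]
    by (rule unitary_conj_diag_entry[OF S l])
  also have "\<dots> = (\<Sum>k<L. complex_of_real (1 / (d k * h k) * (1 / real L)))"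
    by (rule sum.cong[OF refl]) (simp add: dft_abs l)
  also have "\<dots> = complex_of_real ((\<Sum>k<L. 1 / (d k * h k)) * (1 / real L))"
    by (simp only: sum_distrib_right of_real_sum)
  finally have "complex_of_real \<sigma>2 * minv (gram H U) $$ (l, l)
      = complex_of_real (\<sigma>2 * (\<Sum>k<L. 1 / (d k * h k)) * (1 / real L))"
    by (simp add: mult.assoc)
  also have "\<sigma>2 * (\<Sum>k<L. 1 / (d k * h k)) = \<gamma> / real n"
    using budget by (simp add: sum_distrib_left)
  finally show ?thesis by simp
qed

lemma power_lower_bound:
  fixes H U :: "complex mat" and mu :: "nat \<Rightarrow> real"
  assumes \<sigma>2: "\<sigma>2 > 0" and \<gamma>: "\<gamma> > 0" and n: "n \<ge> 1"
    and H: "H \<in> carrier_mat NR M"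
    and cp: "char_poly (mat_adjoint H * H) = (\<Prod>i<M. [:- complex_of_real (mu i), 1:])"
    and sorted: "\<And>i j. i \<le> j \<Longrightarrow> j < M \<Longrightarrow> mu j \<le> mu i"
    and LM: "1 \<le> L" "L \<le> M" and pos: "\<And>l. l < L \<Longrightarrow> mu l > 0"
    and feas: "feasible \<sigma>2 \<gamma> n H M L U"
  shows "\<sigma>2 * (\<Sum>l<L. 1 / sqrt (mu l))\<^sup>2 / (\<gamma> / real n) \<le> Re (mtrace (mat_adjoint U * U))"
proof -
  have A: "mat_adjoint H * H \<in> carrier_mat M M" using mult_carrier_mat[OF adjoint_carrier[OF H] H] .
  have hA: "mat_adjoint (mat_adjoint H * H) = mat_adjoint H * H"
    using adjoint_mult[OF adjoint_carrier[OF H] H] by simp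
  obtain V where V: "V \<in> carrier_mat M M" and VV: "V * mat_adjoint V = 1\<^sub>m M"
    and VD: "mat_adjoint V * (mat_adjoint H * H) * V = mat_diag M (\<lambda>i. complex_of_real (mu i))"
    using hermitian_diagonalization[OF A hA cp] by blast
  have U: "U \<in> carrier_mat M L" and inv: "invertible_mat (gram H U)"
    and mse: "Re (\<Sum>l<L. complex_of_real \<sigma>2 * minv (gram H U) $$ (l, l)) \<le> \<gamma> / real n"
    using feas unfolding feasible_def by auto
  define T where "T = Re (mtrace (mat_adjoint U * U))"
  define P where "P = Re (\<Sum>l<L. minv (gram H U) $$ (l,l))"
  have TP: "(\<Sum>l<L. 1 / sqrt (mu l))\<^sup>2 \<le> T * P"
    unfolding T_def P_def by (rule trace_inequality[OF H V VV VD LM sorted pos U inv])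
  have mse': "\<sigma>2 * P \<le> \<gamma> / real n" using mse unfolding P_def by (simp add: sum_distrib_left[symmetric])
  have T0: "T \<ge> 0"
    unfolding T_def trace_adjoint_mult[OF U] by (simp add: sum_nonneg)
  have "\<sigma>2 * (\<Sum>l<L. 1 / sqrt (mu l))\<^sup>2 \<le> \<sigma>2 * (T * P)" using TP \<sigma>2 by (intro mult_left_mono) auto
  also have "\<dots> = T * (\<sigma>2 * P)" by (simp add: mult_ac)
  also have "\<dots> \<le> T * (\<gamma> / real n)" using mse' T0 by (intro mult_left_mono)
  finally have "\<sigma>2 * (\<Sum>l<L. 1 / sqrt (mu l))\<^sup>2 \<le> T * (\<gamma> / real n)" .
  moreover have "\<gamma> / real n > 0" using \<gamma> n by simp
  ultimately have "\<sigma>2 * (\<Sum>l<L. 1 / sqrt (mu l))\<^sup>2 / (\<gamma> / real n) \<le> T"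
    by (simp only: pos_divide_le_eq)
  then show ?thesis unfolding T_def .
qed

lemma waterfilling_power:
  fixes h u :: "nat \<Rightarrow> real"
  assumes \<sigma>2: "\<sigma>2 > 0" and \<nu>: "\<nu> > 0" and h: "\<forall>l<L. h l > 0"
    and u: "\<forall>l<L. u l = sqrt (\<nu> * \<sigma>2 / h l)"
    and budget: "(\<Sum>l<L. \<sigma>2 / (u l * h l)) = c" and L: "L \<ge> 1"
  shows "(\<Sum>l<L. u l) = \<sigma>2 * (\<Sum>l<L. 1 / sqrt (h l))\<^sup>2 / c"
proof -
  define q where "q = sqrt (\<nu> * \<sigma>2)"
  define Sc where "Sc = (\<Sum>l<L. 1 / sqrt (h l))"
  have q: "q > 0" unfolding q_def using \<nu> \<sigma>2 by simp
  have u_eq: "u l = q * (1 / sqrt (h l))" if "l < L" for l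
    using u that unfolding q_def by (simp add: real_sqrt_divide)
  have uh: "u l * h l = q * sqrt (h l)" if l: "l < L" for l
  proof -
    have "u l * h l = q * (h l / sqrt (h l))" using u_eq[OF l] by simp
    also have "h l / sqrt (h l) = sqrt (h l)" using h l by (intro real_div_sqrt) (simp add: less_imp_le)
    finally show ?thesis .
  qed
  have c_eq: "c = \<sigma>2 / q * Sc"
    unfolding budget[symmetric] Sc_def sum_distrib_left
    using h by (intro sum.cong) (simp_all add: uh)
  have Sc_pos: "Sc > 0" unfolding Sc_def using h L by (intro sum_pos) (auto simp: set_eq_iff intro: exI[of _ 0])
  have "(\<Sum>l<L. u l) = q * Sc" unfolding Sc_def by (simp add: u_eq sum_distrib_left)
  then show ?thesis unfolding Sc_def[symmetric] c_eq using \<sigma>2 q Sc_pos by (simp add: field_simps power2_eq_square)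
qed

theorem proposition1:
  fixes \<sigma>2 \<gamma> \<nu> :: real and n NR M L :: nat
    and H V1 :: "complex mat" and lamH lamU :: "nat \<Rightarrow> real"
  assumes "\<sigma>2 > 0" and "\<gamma> > 0" and "n \<ge> 1"
    and H: "H \<in> carrier_mat NR M"
    and L: "L \<ge> 1" "L \<le> vec_space.rank NR H"
    and eig: "\<exists>\<mu> :: nat \<Rightarrow> real.
              char_poly (mat_adjoint H * H) = (\<Prod>i<M. [:- complex_of_real (\<mu> i), 1:]) \<and>
              (\<forall>i j. i \<le> j \<longrightarrow> j < M \<longrightarrow> \<mu> j \<le> \<mu> i) \<and>
              (\<forall>l<L. lamH l = \<mu> l)"
    and lamH_pos: "\<forall>l<L. lamH l > 0"
    and V1: "V1 \<in> carrier_mat M L" "mat_adjoint V1 * V1 = 1\<^sub>m L"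
    and V1_eig: "\<forall>l<L. (mat_adjoint H * H) *\<^sub>v col V1 l = complex_of_real (lamH l) \<cdot>\<^sub>v col V1 l"
    and \<nu>: "\<nu> > 0" "(\<Sum>l<L. \<sigma>2 / (lamU l * lamH l)) = \<gamma> / real n"
    and lamU: "\<forall>l<L. lamU l = sqrt (\<nu> * \<sigma>2 / lamH l)"
  shows
    "(\<forall>S. unitary_mat L S \<longrightarrow>
        (let U = V1 * mat_diag L (\<lambda>l. complex_of_real (sqrt (lamU l))) * mat_adjoint S in
          feasible \<sigma>2 \<gamma> n H M L U \<and>
          (\<forall>U'. feasible \<sigma>2 \<gamma> n H M L U' \<longrightarrow>
                 Re (mtrace (mat_adjoint U * U)) \<le> Re (mtrace (mat_adjoint U' * U'))) \<and>
          mtrace (mat_adjoint U * U) = complex_of_real (\<Sum>l<L. lamU l))) \<and>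
     (\<exists>S. unitary_mat L S \<and>
        (let U = V1 * mat_diag L (\<lambda>l. complex_of_real (sqrt (lamU l))) * mat_adjoint S in
          \<forall>l<L. complex_of_real \<sigma>2 * minv (gram H U) $$ (l, l)
                 = complex_of_real ((1 / real L) * (\<gamma> / real n))))"
proof -
  obtain mu :: "nat \<Rightarrow> real" where cp: "char_poly (mat_adjoint H * H) = (\<Prod>i<M. [:- complex_of_real (mu i), 1:])"
    and sorted: "\<And>i j. i \<le> j \<Longrightarrow> j < M \<Longrightarrow> mu j \<le> mu i" and lamH_mu: "\<forall>l<L. lamH l = mu l"
    using eig by blast
  have LM: "L \<le> M" using L vec_space.rank_le_nc[OF H] by simp
  have lamU_pos: "\<forall>l<L. lamU l > 0" using lamU lamH_pos \<nu> \<open>\<sigma>2 > 0\<close> by simp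
  have optimal: "(\<Sum>l<L. lamU l) \<le> Re (mtrace (mat_adjoint U' * U'))"
    if "feasible \<sigma>2 \<gamma> n H M L U'" for U'
  proof -
    have "(\<Sum>l<L. 1 / sqrt (lamH l)) = (\<Sum>l<L. 1 / sqrt (mu l))" using lamH_mu by simp
    then show ?thesis
      using waterfilling_power[OF \<open>\<sigma>2 > 0\<close> \<nu>(1) lamH_pos lamU \<nu>(2) L(1)]
        power_lower_bound[OF \<open>\<sigma>2 > 0\<close> \<open>\<gamma> > 0\<close> \<open>n \<ge> 1\<close> H cp sorted L(1) LM _ that] lamH_pos lamH_mu
      by simp
  qed
  have "L > 0" using L by simp
  show ?thesis
    unfolding Let_def
    using precoder_feasible[OF H V1 V1_eig _ lamU_pos lamH_pos refl \<nu>(2)] optimal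
      dft_unitary[OF \<open>L > 0\<close>] dft_precoder_equal_mse[OF H V1 V1_eig \<open>L > 0\<close> lamU_pos lamH_pos refl \<nu>(2)]
    by (auto intro!: exI[of _ "dft L"])
qed
end
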